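(* Let $f:\mathbb{R}^\ell\times\mathbb{R}^m\to\mathbb{R}^\ell$ be $C^1$, let $\Lambda$ be a parameter shift with limits $\lambda_\pm$, and let $X$ define a stable path. Let $\epsilon>0$. Then there exists $r_0>0$ such that for every $r\in(0,r_0)$ there is a solution $\{y_n\}_{n\in\mathbb{Z}}$ of $x_{n+1}=f(x_n,\Lambda(rn))$ with $\|y_n-X(rn)\|<\epsilon$ for all $n\in\mathbb{Z}$ (Euclidean norm).
   Context: A parameter shift is a $C^1$ function $\Lambda:\mathbb{R}\to\mathbb{R}^m$ with $\lim_{s\to\pm\infty}\Lambda(s)=\lambda_\pm$ and $\lim_{s\to\pm\infty}\Lambda'(s)=0$. A stable path is given by $X:\mathbb{R}\to\mathbb{R}^\ell$ such that: $X(s)$ is a fixed point of $f(\cdot,\Lambda(s))$ for every $s$; $\{(s,X(s))\}$ is a connected curve; the limits $X_\pm=\lim_{s\to\pm\infty}X(s)$ exist and are fixed points of $f(\cdot,\lambda_\pm)$; and the spectral radius of $D_xf(X(s),\Lambda(s))$ is $<1$ for all $s\in\mathbb{R}\cup\{\pm\infty\}$ (with $X(\pm\infty)=X_\pm$, $\Lambda(\pm\infty)=\lambda_\pm$). A solution of $x_{n+1}=f(x_n,\Lambda(rn))$ is a sequence $\{x_n\}_{n\in\mathbb{Z}}$ satisfying it for all $n\in\mathbb{Z}$. *)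

theory Defs
  imports "HOL-Analysis.Analysis"
begin

definition C1_map :: "('a::euclidean_space \<Rightarrow> 'b::euclidean_space) \<Rightarrow> bool" where
  "C1_map g \<longleftrightarrow> (\<exists>g'::'a \<Rightarrow> ('a \<Rightarrow>\<^sub>L 'b).
      (\<forall>z. (g has_derivative blinfun_apply (g' z)) (at z)) \<and> continuous_on UNIV g')"

definition parameter_shift ::
  "(real \<Rightarrow> real^'m) \<Rightarrow> real^'m \<Rightarrow> real^'m \<Rightarrow> bool" where
  "parameter_shift Lam lm lp \<longleftrightarrow> (\<exists>Lam'. (\<forall>s. (Lam has_vector_derivative Lam' s) (at s))
      \<and> continuous_on UNIV Lam'
      \<and> (Lam \<longlongrightarrow> lp) at_top \<and> (Lam \<longlongrightarrow> lm) at_bot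
      \<and> (Lam' \<longlongrightarrow> 0) at_top \<and> (Lam' \<longlongrightarrow> 0) at_bot)"

definition is_fixed_point ::
  "((real^'l) \<times> (real^'m) \<Rightarrow> real^'l) \<Rightarrow> real^'m \<Rightarrow> real^'l \<Rightarrow> bool" where
  "is_fixed_point f lam x \<longleftrightarrow> f (x, lam) = x"

definition Dx :: "((real^'l) \<times> (real^'m) \<Rightarrow> real^'l) \<Rightarrow> real^'l \<Rightarrow> real^'m \<Rightarrow> (real^'l \<Rightarrow> real^'l)" where
  "Dx f x lam = frechet_derivative (\<lambda>y. f (y, lam)) (at x)"

definition complexify :: "real^'n^'n \<Rightarrow> complex^'n^'n" where
  "complexify A = (\<chi> i j. complex_of_real (A $ i $ j))"

definition eigenvalues_c :: "real^'n^'n \<Rightarrow> complex set" where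
  "eigenvalues_c A = {z. \<exists>v::complex^'n. v \<noteq> 0 \<and> complexify A *v v = z *s v}"

definition spectral_radius_r :: "real^'n^'n \<Rightarrow> real" where
  "spectral_radius_r A = Max (cmod ` eigenvalues_c A)"

definition stable_path ::
  "((real^'l) \<times> (real^'m) \<Rightarrow> real^'l) \<Rightarrow> (real \<Rightarrow> real^'m) \<Rightarrow> real^'m \<Rightarrow> real^'m
     \<Rightarrow> (real \<Rightarrow> real^'l) \<Rightarrow> bool" where
  "stable_path f Lam lm lp X \<longleftrightarrow>
     (\<forall>s. is_fixed_point f (Lam s) (X s))
   \<and> connected (range (\<lambda>s. (s, X s)))
   \<and> (\<exists>Xm Xp. (X \<longlongrightarrow> Xp) at_top \<and> (X \<longlongrightarrow> Xm) at_bot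
        \<and> is_fixed_point f lp Xp \<and> is_fixed_point f lm Xm
        \<and> (\<forall>s. spectral_radius_r (matrix (Dx f (X s) (Lam s))) < 1)
        \<and> spectral_radius_r (matrix (Dx f Xp lp)) < 1
        \<and> spectral_radius_r (matrix (Dx f Xm lm)) < 1)"

definition is_solution ::
  "((real^'l) \<times> (real^'m) \<Rightarrow> real^'l) \<Rightarrow> (real \<Rightarrow> real^'m) \<Rightarrow> real \<Rightarrow> (int \<Rightarrow> real^'l) \<Rightarrow> bool" where
  "is_solution f Lam r y \<longleftrightarrow> (\<forall>n::int. y (n + 1) = f (y n, Lam (r * of_int n)))"

end

theory Submission
  imports Defs Jordan_Normal_Form.Spectral_Radius
begin

no_notation Matrix.vec_index (infixl "$" 100)
no_notation Matrix.scalar_prod (infix "\<bullet>" 70)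

lemma linear_funpow:
  assumes "linear (L :: 'a::real_vector \<Rightarrow> 'a)"
  shows "linear (L ^^ k)"
proof (induction k)
  case (Suc k)
  then show ?case
    using linear_compose[OF Suc assms] by (simp only: funpow.simps(2))
qed (simp add: linear_id[unfolded id_def])

definition jnf_index :: "nat \<Rightarrow> 'n::finite" where
  "jnf_index = (SOME h. bij_betw h {..<CARD('n)} UNIV)"

lemma bij_jnf_index: "bij_betw (jnf_index :: nat \<Rightarrow> 'n::finite) {..<CARD('n)} UNIV"
proof -
  obtain h :: "nat \<Rightarrow> 'n" where "bij_betw h {0..<CARD('n)} UNIV"
    using ex_bij_betw_nat_finite[of "UNIV :: 'n set"] by auto
  then show ?thesis
    using someI[of "\<lambda>h. bij_betw h {..<CARD('n)} (UNIV :: 'n set)" h]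
    by (simp add: jnf_index_def atLeast0LessThan)
qed

lemma jnf_index_surj: obtains i where "i < CARD('n)" "jnf_index i = (l :: 'n::finite)"
  using bij_jnf_index[where 'n = 'n] unfolding bij_betw_def by (metis UNIV_I imageE lessThan_iff)

definition to_jnf :: "real^'n^'n \<Rightarrow> complex Matrix.mat" where
  "to_jnf A = Matrix.mat CARD('n) CARD('n) (\<lambda>(i, j). complex_of_real (A $ jnf_index i $ jnf_index j))"

definition to_jnf_vec :: "complex^'n \<Rightarrow> complex Matrix.vec" where
  "to_jnf_vec w = Matrix.vec CARD('n) (\<lambda>i. w $ jnf_index i)"

lemma to_jnf_carrier [simp]: "to_jnf (A :: real^'n^'n) \<in> carrier_mat CARD('n) CARD('n)"
  by (simp add: to_jnf_def)

lemma dim_to_jnf [simp]: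
  "dim_row (to_jnf (A :: real^'n^'n)) = CARD('n)" "dim_col (to_jnf (A :: real^'n^'n)) = CARD('n)"
  by (simp_all add: to_jnf_def)

lemma to_jnf_vec_carrier [simp]: "to_jnf_vec (w :: complex^'n) \<in> carrier_vec CARD('n)"
  by (simp add: to_jnf_vec_def)

lemma sum_jnf_index: "(\<Sum>k<CARD('n). g (jnf_index k)) = (\<Sum>l\<in>UNIV. g (l :: 'n::finite))"
  using sum.reindex_bij_betw[OF bij_jnf_index, of g] by simp

lemma to_jnf_mult: "to_jnf ((A :: real^'n^'n) ** B) = to_jnf A * to_jnf B"
  by (rule eq_matI)
    (simp_all add: to_jnf_def matrix_matrix_mult_def Matrix.scalar_prod_def atLeast0LessThan
      sum_jnf_index[where g = "\<lambda>l. complex_of_real (A $ _ $ l) * complex_of_real (B $ l $ _)"])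

lemma to_jnf_mat_1: "to_jnf (Finite_Cartesian_Product.mat 1 :: real^'n^'n) = 1\<^sub>m CARD('n)"
proof (rule eq_matI)
  fix i j assume "i < dim_row (1\<^sub>m CARD('n))" "j < dim_col (1\<^sub>m CARD('n))"
  moreover have "i < CARD('n) \<Longrightarrow> j < CARD('n) \<Longrightarrow> jnf_index i = (jnf_index j :: 'n) \<longleftrightarrow> i = j"
    using bij_jnf_index[where 'n = 'n] unfolding bij_betw_def inj_on_def by auto
  ultimately show "to_jnf (Finite_Cartesian_Product.mat 1 :: real^'n^'n) $$ (i, j) = 1\<^sub>m CARD('n) $$ (i, j)"
    by (simp add: to_jnf_def Finite_Cartesian_Product.mat_def)
qed (auto simp: to_jnf_def)

lemma to_jnf_matrix_funpow:
  assumes "linear (L :: real^'n \<Rightarrow> real^'n)"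
  shows "to_jnf (matrix (L ^^ k)) = to_jnf (matrix L) ^\<^sub>m k"
proof (induction k)
  case 0
  then show ?case
    by (simp add: matrix_id_mat_1[unfolded id_def] to_jnf_mat_1)
next
  case (Suc k)
  have "matrix (L ^^ Suc k) = matrix (L ^^ k) ** matrix L"
    using matrix_compose[OF assms linear_funpow[OF assms, of k]] by (simp only: funpow_Suc_right)
  then show ?case
    using Suc by (simp add: to_jnf_mult del: funpow.simps)
qed

lemma to_jnf_vec_inject: "to_jnf_vec v = to_jnf_vec w \<longleftrightarrow> v = (w :: complex^'n)"
proof
  assume eq: "to_jnf_vec v = to_jnf_vec w"
  have "v $ l = w $ l" for l :: 'n
  proof -
    obtain i where "i < CARD('n)" "jnf_index i = l" by (rule jnf_index_surj)
    then show ?thesis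
      using arg_cong[OF eq, of "\<lambda>u. vec_index u i"] by (simp add: to_jnf_vec_def)
  qed
  then show "v = w" by (simp add: Finite_Cartesian_Product.vec_eq_iff)
qed simp

lemma to_jnf_vec_surj:
  assumes "u \<in> carrier_vec CARD('n::finite)"
  obtains w :: "complex^'n" where "u = to_jnf_vec w"
proof
  let ?g = "the_inv_into {..<CARD('n)} (jnf_index :: nat \<Rightarrow> 'n)"
  have "?g (jnf_index i) = i" if "i < CARD('n)" for i
    using bij_jnf_index[where 'n = 'n] that by (simp add: bij_betw_def the_inv_into_f_f)
  then show "u = to_jnf_vec (\<chi> l. vec_index u (?g l))"
    using assms by (intro eq_vecI) (auto simp: to_jnf_vec_def)
qed

lemma to_jnf_mult_vec: "to_jnf A *\<^sub>v to_jnf_vec w = to_jnf_vec (complexify A *v w)"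
  by (rule eq_vecI)
    (simp_all add: to_jnf_def to_jnf_vec_def complexify_def matrix_vector_mult_def
      Matrix.scalar_prod_def atLeast0LessThan
      sum_jnf_index[where g = "\<lambda>l. complex_of_real (A $ _ $ l) * w $ l"])

lemma spectrum_to_jnf: "Spectral_Radius.spectrum (to_jnf A) = eigenvalues_c (A :: real^'n^'n)"
proof -
  have zero: "to_jnf_vec (0 :: complex^'n) = 0\<^sub>v CARD('n)"
    by (rule eq_vecI) (simp_all add: to_jnf_vec_def)
  have smult: "to_jnf_vec (z *s w) = z \<cdot>\<^sub>v to_jnf_vec w" for z and w :: "complex^'n"
    by (rule eq_vecI) (simp_all add: to_jnf_vec_def)
  have "eigenvector (to_jnf A) (to_jnf_vec w) z \<longleftrightarrow> w \<noteq> 0 \<and> complexify A *v w = z *s w" for z w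
    by (simp only: eigenvector_def dim_to_jnf to_jnf_vec_carrier to_jnf_mult_vec flip: zero smult)
      (simp add: to_jnf_vec_inject)
  moreover have "eigenvector (to_jnf A) u z \<Longrightarrow> \<exists>w :: complex^'n. u = to_jnf_vec w" for u z
    unfolding eigenvector_def dim_to_jnf by (elim conjE to_jnf_vec_surj) blast
  ultimately show ?thesis
    unfolding Spectral_Radius.spectrum_def eigenvalue_def eigenvalues_c_def by blast
qed

lemma finite_eigenvalues_c: "finite (eigenvalues_c (A :: real^'n^'n))"
  using card_finite_spectrum(1)[OF to_jnf_carrier] by (simp add: spectrum_to_jnf)

lemma eigenvalue_le_spectral_radius_r: "z \<in> eigenvalues_c A \<Longrightarrow> cmod z \<le> spectral_radius_r A"
  unfolding spectral_radius_r_def using finite_eigenvalues_c by (intro Max_ge) auto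

lemma eigenvalues_c_scaleR:
  assumes "c \<noteq> 0" and "z \<in> eigenvalues_c (c *\<^sub>R (A :: real^'n^'n))"
  shows "z / complex_of_real c \<in> eigenvalues_c A"
proof -
  obtain w :: "complex^'n" where w: "w \<noteq> 0" "complexify (c *\<^sub>R A) *v w = z *s w"
    using assms(2) by (auto simp: eigenvalues_c_def)
  have "complexify (c *\<^sub>R A) *v w = complex_of_real c *s (complexify A *v w)"
    by (simp add: Finite_Cartesian_Product.vec_eq_iff complexify_def matrix_vector_mult_def sum_distrib_left mult.assoc)
  then have "complexify A *v w = (z / complex_of_real c) *s w"
    using w(2) assms(1) by (simp add: Finite_Cartesian_Product.vec_eq_iff field_simps)
  then show ?thesis
    using w(1) by (auto simp: eigenvalues_c_def)
qed

lemma bounded_powers_if_eigenvalues_in_disc: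
  fixes L :: "real^'n \<Rightarrow> real^'n"
  assumes L: "linear L" and E: "\<And>z. z \<in> eigenvalues_c (matrix L) \<Longrightarrow> cmod z < 1"
  obtains c where "\<And>k v. norm ((L ^^ k) v) \<le> c * norm v"
proof -
  define B where "B = to_jnf (matrix L)"
  have B: "B \<in> carrier_mat CARD('n) CARD('n)"
    by (simp add: B_def)
  have "spectral_radius B \<in> norm ` Spectral_Radius.spectrum B"
    by (rule spectral_radius_mem_max(1)[OF B]) simp
  then have "spectral_radius B < 1"
    using E by (auto simp: B_def spectrum_to_jnf)
  then obtain c where c: "\<And>k. norm_bound (B ^\<^sub>m k) c"
    using spectral_radius_jnf_norm_bound_less_1_upper_triangular[OF B] by auto
  have entries: "\<bar>matrix (L ^^ k) $ i $ j\<bar> \<le> c" for k i j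
  proof -
    obtain i' j' where ij: "i' < CARD('n)" "jnf_index i' = i" "j' < CARD('n)" "jnf_index j' = j"
      by (metis jnf_index_surj)
    then have "(B ^\<^sub>m k) $$ (i', j') = complex_of_real (matrix (L ^^ k) $ i $ j)"
      unfolding B_def to_jnf_matrix_funpow[OF L, symmetric] by (simp add: to_jnf_def)
    moreover have "norm ((B ^\<^sub>m k) $$ (i', j')) \<le> c"
      using c[of k] ij B unfolding norm_bound_def by auto
    ultimately show ?thesis
      by simp
  qed
  have "norm ((L ^^ k) v) \<le> (real CARD('n) * real CARD('n) * c) * norm v" for k v
  proof -
    have "norm ((L ^^ k) v) = norm (matrix (L ^^ k) *v v)"
      using fun_cong[OF matrix_vector_mul(2)[OF linear_funpow[OF L, of k]], of v] by simp
    also have "\<dots> \<le> onorm ((*v) (matrix (L ^^ k))) * norm v"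
      by (rule onorm[OF matrix_vector_mul_bounded_linear])
    also have "\<dots> \<le> (real CARD('n) * real CARD('n) * c) * norm v"
      by (intro mult_right_mono onorm_le_matrix_component entries) simp
    finally show ?thesis .
  qed
  then show ?thesis
    using that by blast
qed

lemma linear_power_halves:
  fixes L :: "real^'n \<Rightarrow> real^'n"
  assumes L: "linear L" and sr: "spectral_radius_r (matrix L) < 1"
  obtains k where "\<And>v. norm ((L ^^ k) v) \<le> 1/2 * norm v"
proof -
  \<comment> \<open>Rescale L by a factor 1/\<rho> with spectral radius < \<rho> < 1, so that the powers of the rescaled map stay bounded.\<close>
  define \<rho> where "\<rho> = (max (spectral_radius_r (matrix L)) 0 + 1) / 2"
  have \<rho>: "0 < \<rho>" "\<rho> < 1" "spectral_radius_r (matrix L) < \<rho>"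
    using sr by (auto simp: \<rho>_def)
  define L' where "L' v = (1 / \<rho>) *\<^sub>R L v" for v
  have L': "linear L'"
    unfolding L'_def using L by (intro linear_compose_scale_right)
  have "cmod z < 1" if "z \<in> eigenvalues_c (matrix L')" for z
  proof -
    have "matrix L' = (1 / \<rho>) *\<^sub>R matrix L"
      by (simp add: L'_def matrix_def Finite_Cartesian_Product.vec_eq_iff)
    then have "z / complex_of_real (1 / \<rho>) \<in> eigenvalues_c (matrix L)"
      using eigenvalues_c_scaleR[of "1 / \<rho>"] that \<rho> by simp
    then have "cmod (z / complex_of_real (1 / \<rho>)) \<le> spectral_radius_r (matrix L)"
      by (rule eigenvalue_le_spectral_radius_r)
    then have "\<rho> * cmod z \<le> spectral_radius_r (matrix L)"
      using \<rho> by (simp add: norm_mult norm_divide mult.commute)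
    then show ?thesis
      using \<rho> by (smt (verit) mult_le_cancel_left1)
  qed
  then obtain c where c: "\<And>k v. norm ((L' ^^ k) v) \<le> c * norm v"
    using bounded_powers_if_eigenvalues_in_disc[OF L'] by blast
  have power_L': "(L' ^^ k) v = (1 / \<rho>) ^ k *\<^sub>R (L ^^ k) v" for k v
    by (induction k) (simp_all add: L'_def linear_cmul[OF L])
  have "0 < 1 / (2 * (\<bar>c\<bar> + 1))"
    by (simp add: add_nonneg_pos)
  then obtain k where k: "\<rho> ^ k < 1 / (2 * (\<bar>c\<bar> + 1))"
    using real_arch_pow_inv \<rho> by blast
  have "norm ((L ^^ k) v) \<le> 1/2 * norm v" for v
  proof -
    have "norm ((L ^^ k) v) = \<rho> ^ k * norm ((L' ^^ k) v)"
      using \<rho> by (simp add: power_L' field_simps)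
    also have "\<dots> \<le> \<rho> ^ k * ((\<bar>c\<bar> + 1) * norm v)"
      using c[of k v] \<rho> by (intro mult_left_mono) (auto intro: order_trans[OF _ mult_right_mono])
    also have "\<dots> \<le> 1 / (2 * (\<bar>c\<bar> + 1)) * ((\<bar>c\<bar> + 1) * norm v)"
      using k by (intro mult_right_mono) auto
    also have "\<dots> = 1/2 * norm v"
      by (simp add: field_simps)
    finally show ?thesis .
  qed
  then show ?thesis
    using that by blast
qed

definition equivalent_norm :: "('a::real_normed_vector \<Rightarrow> real) \<Rightarrow> real \<Rightarrow> bool" where
  "equivalent_norm N C \<longleftrightarrow> 1 \<le> C \<and> (\<forall>v. norm v \<le> N v \<and> N v \<le> C * norm v)
     \<and> (\<forall>u v. N (u + v) \<le> N u + N v) \<and> (\<forall>c v. N (c *\<^sub>R v) = \<bar>c\<bar> * N v)"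

lemma equivalent_normD:
  assumes "equivalent_norm N C"
  shows "1 \<le> C" "norm v \<le> N v" "N v \<le> C * norm v" "N (u + v) \<le> N u + N v"
    "N (u - v) \<le> N u + N v"
proof -
  show "1 \<le> C" "norm v \<le> N v" "N v \<le> C * norm v" "N (u + v) \<le> N u + N v"
    using assms by (auto simp: equivalent_norm_def)
  have "N (- v) = N v"
    using assms unfolding equivalent_norm_def by (metis abs_minus_cancel abs_one mult_1 scaleR_minus1_left)
  then show "N (u - v) \<le> N u + N v"
    using assms unfolding equivalent_norm_def by (metis diff_conv_add_uminus)
qed

text \<open>The adapted norm is \<open>N v = (\<Sum>j<k. \<parallel>L\<^sup>j v\<parallel>)\<close> with \<open>\<parallel>L\<^sup>k\<parallel> \<le> 1/2\<close>:
  telescoping gives \<open>N (L v) = N v - \<parallel>v\<parallel> + \<parallel>L\<^sup>k v\<parallel> \<le> N v - \<parallel>v\<parallel>/2\<close>.\<close>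
lemma adapted_norm_exists:
  fixes L :: "real^'n \<Rightarrow> real^'n"
  assumes L: "linear L" and sr: "spectral_radius_r (matrix L) < 1"
  obtains N C q where "equivalent_norm N C" "0 \<le> q" "q < 1" "\<And>v. N (L v) \<le> q * N v"
proof -
  obtain k where k: "\<And>v. norm ((L ^^ k) v) \<le> 1/2 * norm v"
    using linear_power_halves[OF L sr] by blast
  have lin: "linear (L ^^ j)" for j
    using linear_funpow[OF L] .
  have "k \<noteq> 0"
  proof
    assume "k = 0"
    then show False
      using k[of "axis undefined 1"] by simp
  qed
  define N where "N v = (\<Sum>j<k. norm ((L ^^ j) v))" for v
  define C where "C = max 1 (\<Sum>j<k. onorm (L ^^ j))"
  define q where "q = 1 - 1 / (2 * C)"
  have C: "1 \<le> C"
    by (simp add: C_def)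
  have N_le: "N v \<le> C * norm v" for v
  proof -
    have "N v \<le> (\<Sum>j<k. onorm (L ^^ j) * norm v)"
      unfolding N_def using lin by (intro sum_mono onorm) (simp add: linear_conv_bounded_linear)
    also have "\<dots> \<le> C * norm v"
      by (simp add: C_def flip: sum_distrib_right) (intro mult_right_mono; simp)
    finally show ?thesis .
  qed
  have "equivalent_norm N C"
    unfolding equivalent_norm_def
  proof (intro conjI allI C N_le)
    fix u v and c :: real
    have "norm ((L ^^ 0) v) \<le> N v"
      unfolding N_def using \<open>k \<noteq> 0\<close> by (intro member_le_sum) auto
    then show "norm v \<le> N v"
      by simp
    show "N (u + v) \<le> N u + N v"
      unfolding N_def sum.distrib[symmetric] using linear_add[OF lin]
      by (intro sum_mono) (simp add: norm_triangle_ineq)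
    show "N (c *\<^sub>R v) = \<bar>c\<bar> * N v"
      unfolding N_def using linear_cmul[OF lin] by (simp add: sum_distrib_left)
  qed
  moreover have "N (L v) \<le> q * N v" for v
  proof -
    have "N (L v) = (\<Sum>j<Suc k. norm ((L ^^ j) v)) - norm v"
      unfolding N_def sum.lessThan_Suc_shift by (simp add: funpow_swap1)
    also have "\<dots> \<le> N v - 1/2 * norm v"
      using k[of v] by (simp add: N_def)
    also have "\<dots> \<le> N v - 1 / (2 * C) * N v"
      using N_le[of v] C by (simp add: field_simps)
    also have "\<dots> = q * N v"
      by (simp add: q_def algebra_simps)
    finally show ?thesis .
  qed
  moreover have "0 \<le> q" "q < 1"
    using C by (auto simp: q_def field_simps)
  ultimately show ?thesis
    using that by blast
qed

lemma Dx_blinfun: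
  assumes "\<And>z. (f has_derivative blinfun_apply (f' z)) (at z)"
  shows "((\<lambda>y. f (y, \<mu>)) has_derivative (\<lambda>v. f' (x, \<mu>) (v, 0))) (at x)"
    and "Dx f x \<mu> = (\<lambda>v. f' (x, \<mu>) (v, 0))"
proof -
  have "((\<lambda>y. (y, \<mu>)) has_derivative (\<lambda>v. (v, 0))) (at x)"
    by (intro has_derivative_Pair has_derivative_ident has_derivative_const)
  from diff_chain_at[OF this assms]
  show derivative: "((\<lambda>y. f (y, \<mu>)) has_derivative (\<lambda>v. f' (x, \<mu>) (v, 0))) (at x)"
    by (simp add: o_def)
  show "Dx f x \<mu> = (\<lambda>v. f' (x, \<mu>) (v, 0))"
    unfolding Dx_def using frechet_derivative_at[OF derivative] by simp
qed

lemma C1_map_linear_Dx: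
  assumes "C1_map f"
  shows "linear (Dx f x \<mu>)"
proof -
  obtain f' where f': "\<And>z. (f has_derivative blinfun_apply (f' z)) (at z)"
    using assms unfolding C1_map_def by blast
  show ?thesis
    using has_derivative_linear[OF Dx_blinfun(1)[OF f']] by (simp add: Dx_blinfun(2)[OF f'])
qed

text \<open>The remainder \<open>f (x, \<mu>) - Dx f x\<^sub>0 \<mu>\<^sub>0 x\<close> has partial derivative
  \<open>(f' (x, \<mu>) - f' (x\<^sub>0, \<mu>\<^sub>0)) (\<cdot>, 0)\<close>, which is small near \<open>(x\<^sub>0, \<mu>\<^sub>0)\<close>.\<close>
lemma C1_map_partial_remainder:
  fixes f :: "(real^'l) \<times> (real^'m) \<Rightarrow> real^'l"
  assumes "C1_map f" and "0 < \<eta>"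
  obtains d where "0 < d" "\<And>\<mu> x x'. dist \<mu> \<mu>\<^sub>0 < d \<Longrightarrow> x \<in> cball x\<^sub>0 d \<Longrightarrow> x' \<in> cball x\<^sub>0 d \<Longrightarrow>
      norm (f (x, \<mu>) - f (x', \<mu>) - Dx f x\<^sub>0 \<mu>\<^sub>0 (x - x')) \<le> \<eta> * norm (x - x')"
proof -
  obtain f' where f': "\<And>z. (f has_derivative blinfun_apply (f' z)) (at z)" and "continuous_on UNIV f'"
    using assms(1) unfolding C1_map_def by blast
  then obtain d where "0 < d" and d: "\<And>z. dist z (x\<^sub>0, \<mu>\<^sub>0) < d \<Longrightarrow> dist (f' z) (f' (x\<^sub>0, \<mu>\<^sub>0)) < \<eta>"
    using assms(2) unfolding continuous_on_eq_continuous_at[OF open_UNIV] continuous_at_eps_delta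
    by blast
  define L where "L = Dx f x\<^sub>0 \<mu>\<^sub>0"
  have L: "L = (\<lambda>v. f' (x\<^sub>0, \<mu>\<^sub>0) (v, 0))"
    unfolding L_def by (rule Dx_blinfun(2)[OF f'])
  have remainder: "norm ((f (x, \<mu>) - L x) - (f (x', \<mu>) - L x')) \<le> \<eta> * norm (x - x')"
    if \<mu>: "dist \<mu> \<mu>\<^sub>0 < d / 2" and "x \<in> cball x\<^sub>0 (d / 2)" "x' \<in> cball x\<^sub>0 (d / 2)" for \<mu> x x'
  proof (rule differentiable_bound[OF convex_cball _ _ that(2,3)])
    fix y assume y: "y \<in> cball x\<^sub>0 (d / 2)"
    show "((\<lambda>y. f (y, \<mu>) - L y) has_derivative (\<lambda>v. (f' (y, \<mu>) - f' (x\<^sub>0, \<mu>\<^sub>0)) (v, 0)))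
        (at y within cball x\<^sub>0 (d / 2))"
      unfolding L blinfun.diff_left
      by (rule has_derivative_at_withinI)
        (intro has_derivative_diff Dx_blinfun(1)[OF f']
          bounded_linear_imp_has_derivative bounded_linear_compose[OF blinfun.bounded_linear_right]
          bounded_linear_Pair bounded_linear_ident bounded_linear_zero)
    have "dist (y, \<mu>) (x\<^sub>0, \<mu>\<^sub>0) \<le> dist y x\<^sub>0 + dist \<mu> \<mu>\<^sub>0"
      unfolding dist_Pair_Pair by (rule sqrt_sum_squares_le_sum_abs[THEN order_trans]) simp
    also have "\<dots> < d"
      using y \<mu> by (simp add: dist_commute)
    finally have close: "norm (f' (y, \<mu>) - f' (x\<^sub>0, \<mu>\<^sub>0)) \<le> \<eta>"
      using d by (simp add: dist_norm less_imp_le)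
    show "onorm (\<lambda>v. (f' (y, \<mu>) - f' (x\<^sub>0, \<mu>\<^sub>0)) (v, 0)) \<le> \<eta>"
    proof (rule onorm_le)
      fix v :: "real^'l"
      have "norm ((f' (y, \<mu>) - f' (x\<^sub>0, \<mu>\<^sub>0)) (v, 0))
          \<le> norm (f' (y, \<mu>) - f' (x\<^sub>0, \<mu>\<^sub>0)) * norm (v, 0 :: real^'m)"
        by (rule norm_blinfun)
      also have "\<dots> \<le> \<eta> * norm v"
        using close by (simp add: mult_right_mono)
      finally show "norm ((f' (y, \<mu>) - f' (x\<^sub>0, \<mu>\<^sub>0)) (v, 0)) \<le> \<eta> * norm v" .
    qed
  qed
  have split: "f (x, \<mu>) - f (x', \<mu>) - L (x - x') = (f (x, \<mu>) - L x) - (f (x', \<mu>) - L x')"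
    for \<mu> x x'
    using linear_diff[OF C1_map_linear_Dx[OF assms(1)]] by (simp add: L_def)
  show ?thesis
  proof (rule that)
    show "0 < d / 2"
      using \<open>0 < d\<close> by simp
  next
    fix \<mu> x x'
    assume "dist \<mu> \<mu>\<^sub>0 < d / 2" "x \<in> cball x\<^sub>0 (d / 2)" "x' \<in> cball x\<^sub>0 (d / 2)"
    then show "norm (f (x, \<mu>) - f (x', \<mu>) - Dx f x\<^sub>0 \<mu>\<^sub>0 (x - x')) \<le> \<eta> * norm (x - x')"
      unfolding L_def[symmetric] split by (rule remainder)
  qed
qed

lemma C1_map_local_contraction:
  fixes f :: "(real^'l) \<times> (real^'m) \<Rightarrow> real^'l"
  assumes f: "C1_map f" and sr: "spectral_radius_r (matrix (Dx f x\<^sub>0 \<mu>\<^sub>0)) < 1"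
  obtains N C q \<delta> where "equivalent_norm N C" "0 \<le> q" "q < 1" "0 < \<delta>"
    "\<And>\<mu> x x'. dist \<mu> \<mu>\<^sub>0 < \<delta> \<Longrightarrow> x \<in> cball x\<^sub>0 \<delta> \<Longrightarrow> x' \<in> cball x\<^sub>0 \<delta> \<Longrightarrow>
       N (f (x, \<mu>) - f (x', \<mu>)) \<le> q * N (x - x')"
proof -
  define L where "L = Dx f x\<^sub>0 \<mu>\<^sub>0"
  obtain N C q where N: "equivalent_norm N C" and q: "0 \<le> q" "q < 1" and NL: "\<And>v. N (L v) \<le> q * N v"
    using adapted_norm_exists[OF C1_map_linear_Dx[OF f] sr] unfolding L_def by blast
  note N_props = equivalent_normD[OF N]
  define \<eta> where "\<eta> = (1 - q) / (2 * C)"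
  have \<eta>: "0 < \<eta>"
    using q N_props(1) by (simp add: \<eta>_def)
  obtain \<delta> where \<delta>: "0 < \<delta>" and remainder: "\<And>\<mu> x x'. dist \<mu> \<mu>\<^sub>0 < \<delta> \<Longrightarrow> x \<in> cball x\<^sub>0 \<delta> \<Longrightarrow>
      x' \<in> cball x\<^sub>0 \<delta> \<Longrightarrow> norm (f (x, \<mu>) - f (x', \<mu>) - L (x - x')) \<le> \<eta> * norm (x - x')"
    using C1_map_partial_remainder[OF f \<eta>] unfolding L_def by blast
  have "N (f (x, \<mu>) - f (x', \<mu>)) \<le> (q + C * \<eta>) * N (x - x')"
    if "dist \<mu> \<mu>\<^sub>0 < \<delta>" "x \<in> cball x\<^sub>0 \<delta>" "x' \<in> cball x\<^sub>0 \<delta>" for \<mu> x x'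
  proof -
    let ?r = "f (x, \<mu>) - f (x', \<mu>) - L (x - x')"
    have "N (f (x, \<mu>) - f (x', \<mu>)) \<le> N (L (x - x')) + N ?r"
      using N_props(4)[of "L (x - x')" ?r] by simp
    also have "\<dots> \<le> q * N (x - x') + C * (\<eta> * norm (x - x'))"
      using NL[of "x - x'"] N_props(3)[of ?r] remainder[OF that] N_props(1)
      by (smt (verit) mult_left_mono)
    also have "\<dots> \<le> q * N (x - x') + C * (\<eta> * N (x - x'))"
      using N_props(1,2) \<eta> by (simp add: mult_left_mono)
    finally show ?thesis
      by (simp add: algebra_simps)
  qed
  moreover have "0 \<le> q + C * \<eta>" "q + C * \<eta> < 1"
    using q N_props(1) \<eta> by (auto simp: \<eta>_def field_simps)
  ultimately show ?thesis
    using that N \<delta> by blast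
qed

lemma equivalent_norm_continuous:
  assumes "equivalent_norm N C"
  shows "continuous_on UNIV N"
proof -
  note N = equivalent_normD[OF assms]
  have "\<bar>N u - N v\<bar> \<le> C * dist u v" for u v
    using N(4)[of "u - v" v] N(4)[of "v - u" u] N(3)[of "u - v"] N(3)[of "v - u"]
    by (simp add: abs_le_iff dist_norm norm_minus_commute)
  then show ?thesis
    using N(1) by (intro lipschitz_on_continuous_on[of C UNIV]) (simp add: lipschitz_on_def dist_real_def)
qed

lemma convergent_if_geometric_increments:
  fixes z :: "nat \<Rightarrow> 'a::banach"
  assumes "\<And>k. norm (z (Suc k) - z k) \<le> B * q ^ k" and "0 \<le> q" "q < 1"
  shows "convergent z"
proof -
  have "summable (\<lambda>k. z (Suc k) - z k)"
    using assms by (intro summable_comparison_test'[OF summable_mult[OF summable_geometric]]) auto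
  from summable_LIMSEQ[OF this]
  have "(\<lambda>n. (z n - z 0) + z 0) \<longlonglongrightarrow> (\<Sum>k. z (Suc k) - z k) + z 0"
    by (intro tendsto_add) (simp_all add: sum_lessThan_telescope)
  then show ?thesis
    unfolding convergent_def by auto
qed

lemma equivalent_norm_contraction_fixed_point:
  fixes T :: "'a::banach \<Rightarrow> 'a"
  assumes N: "equivalent_norm N C" and q: "0 \<le> q" "q < 1"
    and K: "closed K" "x\<^sub>0 \<in> K" and into: "\<And>x. x \<in> K \<Longrightarrow> T x \<in> K"
    and contr: "\<And>x x'. x \<in> K \<Longrightarrow> x' \<in> K \<Longrightarrow> N (T x - T x') \<le> q * N (x - x')"
  obtains x where "x \<in> K" "T x = x"
proof -
  note N_props = equivalent_normD[OF N]
  define z where "z k = (T ^^ k) x\<^sub>0" for k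
  have zK: "z k \<in> K" for k
    by (induction k) (simp_all add: z_def K into)
  have "N (z (Suc k) - z k) \<le> N (z 1 - z 0) * q ^ k" for k
  proof (induction k)
    case (Suc k)
    have "N (z (Suc (Suc k)) - z (Suc k)) \<le> q * N (z (Suc k) - z k)"
      using contr[OF zK[of "Suc k"] zK[of k]] by (simp add: z_def)
    also have "\<dots> \<le> N (z 1 - z 0) * q ^ Suc k"
      using Suc q by (simp add: mult_left_mono algebra_simps)
    finally show ?case .
  qed simp
  then have "norm (z (Suc k) - z k) \<le> N (z 1 - z 0) * q ^ k" for k
    using N_props(2) order_trans by blast
  then obtain x where x: "z \<longlonglongrightarrow> x"
    using convergent_if_geometric_increments q unfolding convergent_def by blast
  have xK: "x \<in> K"
    using closed_sequentially[OF K(1)] zK x by blast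
  have "dist (T y) (T y') \<le> q * C * dist y y'" if "y \<in> K" "y' \<in> K" for y y'
  proof -
    have "norm (T y - T y') \<le> q * N (y - y')"
      using contr[OF that] N_props(2)[of "T y - T y'"] by linarith
    also have "\<dots> \<le> q * (C * norm (y - y'))"
      using N_props(3) q by (simp add: mult_left_mono)
    finally show ?thesis
      by (simp add: dist_norm mult.assoc)
  qed
  then have "continuous_on K T"
    using q N_props(1) by (intro lipschitz_on_continuous_on[of "q * C" K]) (simp add: lipschitz_on_def)
  then have "(\<lambda>k. T (z k)) \<longlonglongrightarrow> T x"
    using x xK zK by (intro continuous_on_tendsto_compose[of K T]) auto
  moreover have "(\<lambda>k. T (z k)) \<longlonglongrightarrow> x"
    using LIMSEQ_Suc[OF x] by (simp add: z_def)
  ultimately show ?thesis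
    using that xK LIMSEQ_unique by metis
qed

lemma equivalent_norm_contracted_eq_0:
  assumes "equivalent_norm N C" "q < 1" "N v \<le> q * N v"
  shows "v = 0"
proof -
  have "(1 - q) * N v \<le> 0"
    using assms(3) by (simp add: algebra_simps)
  then have "N v \<le> 0"
    using assms(2) by (simp add: mult_le_0_iff)
  then show ?thesis
    using equivalent_normD(2)[OF assms(1), of v] by (meson norm_le_zero_iff order_trans)
qed

lemma continuous_fixed_point_branch:
  fixes T :: "'p::topological_space \<Rightarrow> 'a::banach \<Rightarrow> 'a"
  assumes N: "equivalent_norm N C" and q: "0 \<le> q" "q < 1"
    and K: "closed K" "x\<^sub>0 \<in> K" and into: "\<And>p x. p \<in> I \<Longrightarrow> x \<in> K \<Longrightarrow> T p x \<in> K"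
    and contr: "\<And>p x x'. p \<in> I \<Longrightarrow> x \<in> K \<Longrightarrow> x' \<in> K \<Longrightarrow> N (T p x - T p x') \<le> q * N (x - x')"
    and cont: "\<And>x. x \<in> K \<Longrightarrow> continuous_on I (\<lambda>p. T p x)"
  obtains g where "continuous_on I g" "\<And>p. p \<in> I \<Longrightarrow> g p \<in> K" "\<And>p. p \<in> I \<Longrightarrow> T p (g p) = g p"
proof -
  note N_props = equivalent_normD[OF N]
  have "\<forall>p\<in>I. \<exists>x. x \<in> K \<and> T p x = x"
  proof
    fix p assume "p \<in> I"
    obtain x where "x \<in> K" "T p x = x"
      using equivalent_norm_contraction_fixed_point[OF N q K into[OF \<open>p \<in> I\<close>] contr[OF \<open>p \<in> I\<close>]] .
    then show "\<exists>x. x \<in> K \<and> T p x = x"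
      by blast
  qed
  from bchoice[OF this] obtain g where g: "\<And>p. p \<in> I \<Longrightarrow> g p \<in> K \<and> T p (g p) = g p"
    by blast
  have bound: "norm (g p' - g p) \<le> C / (1 - q) * norm (T p' (g p) - T p (g p))"
    if "p \<in> I" "p' \<in> I" for p p'
  proof -
    have split: "g p' - g p = (T p' (g p') - T p' (g p)) + (T p' (g p) - T p (g p))"
      using g that by simp
    have "N (g p' - g p) \<le> N (T p' (g p') - T p' (g p)) + N (T p' (g p) - T p (g p))"
      unfolding split by (rule N_props(4))
    also have "\<dots> \<le> q * N (g p' - g p) + C * norm (T p' (g p) - T p (g p))"
      by (intro add_mono contr[OF that(2)] N_props(3)) (use g that in auto)
    finally have "N (g p' - g p) \<le> C / (1 - q) * norm (T p' (g p) - T p (g p))"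
      using q by (simp add: field_simps)
    then show ?thesis
      using N_props(2) order_trans by blast
  qed
  have tendsto_g: "(g \<longlongrightarrow> g p) (at p within I)" if p: "p \<in> I" for p
  proof -
    have "((\<lambda>p'. T p' (g p)) \<longlongrightarrow> T p (g p)) (at p within I)"
      using cont g p unfolding continuous_on_def by blast
    then have "((\<lambda>p'. C / (1 - q) * norm (T p' (g p) - T p (g p))) \<longlongrightarrow> 0) (at p within I)"
      by (rule tendsto_mult_right_zero[OF tendsto_norm_zero[OF LIM_zero]])
    moreover have "eventually (\<lambda>p'. norm (g p' - g p) \<le> C / (1 - q) * norm (T p' (g p) - T p (g p)))
        (at p within I)"
      using bound p by (simp add: eventually_at_filter)
    ultimately show ?thesis
      by (rule LIM_zero_cancel[OF Lim_null_comparison, rotated])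
  qed
  show ?thesis
  proof (rule that)
    show "continuous_on I g"
      unfolding continuous_on_def using tendsto_g by blast
  qed (use g in simp_all)
qed

definition branch_box :: "(real \<Rightarrow> 'a::topological_space \<Rightarrow> bool) \<Rightarrow> real set \<Rightarrow> 'a set \<Rightarrow> (real \<Rightarrow> 'a) \<Rightarrow> bool"
  where "branch_box P I V g \<longleftrightarrow> open I \<and> is_interval I \<and> open V \<and> continuous_on I g
    \<and> (\<forall>s\<in>I. g s \<in> V \<and> P s (g s)) \<and> (\<forall>s\<in>I. \<forall>x\<in>V. P s x \<longrightarrow> x = g s)"

lemma C1_map_continuous:
  assumes "C1_map f"
  shows "continuous_on UNIV f"
proof -
  obtain f' where "\<And>z. (f has_derivative blinfun_apply (f' z)) (at z)"
    using assms unfolding C1_map_def by blast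
  then show ?thesis
    by (intro continuous_at_imp_continuous_on ballI has_derivative_continuous)
qed

lemma fixed_point_branch_box:
  fixes f :: "(real^'l) \<times> (real^'m) \<Rightarrow> real^'l" and Lam :: "real \<Rightarrow> real^'m"
  assumes f: "C1_map f" and Lam: "continuous_on UNIV Lam" and fixed: "f (x\<^sub>0, Lam s\<^sub>0) = x\<^sub>0"
    and sr: "spectral_radius_r (matrix (Dx f x\<^sub>0 (Lam s\<^sub>0))) < 1"
  obtains I V g where "branch_box (\<lambda>s x. f (x, Lam s) = x) I V g" "s\<^sub>0 \<in> I" "x\<^sub>0 \<in> V"
proof -
  obtain N C q \<delta> where N: "equivalent_norm N C" and q: "0 \<le> q" "q < 1" and "0 < \<delta>"
    and contr: "\<And>\<mu> x x'. dist \<mu> (Lam s\<^sub>0) < \<delta> \<Longrightarrow> x \<in> cball x\<^sub>0 \<delta> \<Longrightarrow> x' \<in> cball x\<^sub>0 \<delta> \<Longrightarrow>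
       N (f (x, \<mu>) - f (x', \<mu>)) \<le> q * N (x - x')"
    using C1_map_local_contraction[OF f sr] by blast
  note N_props = equivalent_normD[OF N]
  have cont: "continuous_on UNIV (\<lambda>s. f (x, Lam s))" for x
    by (rule continuous_on_compose2[OF C1_map_continuous[OF f] continuous_on_Pair[OF continuous_on_const Lam]])
      simp
  define \<epsilon> where "\<epsilon> = (1 - q) * \<delta> / (2 * C)"
  have "0 < \<epsilon>"
    using q \<open>0 < \<delta>\<close> N_props(1) by (simp add: \<epsilon>_def)
  moreover have "(Lam \<longlongrightarrow> Lam s\<^sub>0) (nhds s\<^sub>0)"
    using Lam by (simp add: continuous_on_eq_continuous_at isCont_def tendsto_at_iff_tendsto_nhds)
  moreover have "((\<lambda>s. f (x\<^sub>0, Lam s)) \<longlongrightarrow> f (x\<^sub>0, Lam s\<^sub>0)) (nhds s\<^sub>0)"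
    using cont[of x\<^sub>0] unfolding continuous_on_eq_continuous_at[OF open_UNIV] isCont_def
    by (blast intro: tendsto_at_iff_tendsto_nhds[THEN iffD1])
  ultimately have "eventually (\<lambda>s. dist (Lam s) (Lam s\<^sub>0) < \<delta> \<and> dist (f (x\<^sub>0, Lam s)) x\<^sub>0 < \<epsilon>) (nhds s\<^sub>0)"
    using \<open>0 < \<delta>\<close> fixed by (intro eventually_conj tendstoD) simp_all
  then obtain a where "0 < a"
    and a: "\<And>s. s \<in> ball s\<^sub>0 a \<Longrightarrow> dist (Lam s) (Lam s\<^sub>0) < \<delta> \<and> dist (f (x\<^sub>0, Lam s)) x\<^sub>0 < \<epsilon>"
    unfolding eventually_nhds_metric mem_ball by (auto simp: dist_commute)
  define K where "K = {x. N (x - x\<^sub>0) \<le> \<delta> / 2}"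
  have K_half: "dist x\<^sub>0 x \<le> \<delta> / 2" if "x \<in> K" for x
    using that N_props(2)[of "x - x\<^sub>0"] by (simp add: K_def dist_norm norm_minus_commute)
  have K_cball: "x \<in> cball x\<^sub>0 \<delta>" if "x \<in> K" for x
    using K_half[OF that] \<open>0 < \<delta>\<close> by simp
  have "closed K"
    unfolding K_def
    by (intro closed_Collect_le continuous_on_const
        continuous_on_compose2[OF equivalent_norm_continuous[OF N] continuous_on_diff]) auto
  moreover have "x\<^sub>0 \<in> K"
    using \<open>0 < \<delta>\<close> N_props(3)[of 0] by (simp add: K_def)
  moreover have "f (x, Lam s) \<in> K" if s: "s \<in> ball s\<^sub>0 a" and x: "x \<in> K" for s x
  proof -
    have "f (x, Lam s) - x\<^sub>0 = (f (x, Lam s) - f (x\<^sub>0, Lam s)) + (f (x\<^sub>0, Lam s) - x\<^sub>0)"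
      by simp
    then have "N (f (x, Lam s) - x\<^sub>0) \<le> N (f (x, Lam s) - f (x\<^sub>0, Lam s)) + N (f (x\<^sub>0, Lam s) - x\<^sub>0)"
      using N_props(4) by metis
    also have "\<dots> \<le> q * N (x - x\<^sub>0) + C * norm (f (x\<^sub>0, Lam s) - x\<^sub>0)"
      using a[OF s] K_cball x \<open>x\<^sub>0 \<in> K\<close> \<open>0 < \<delta>\<close> by (intro add_mono contr N_props(3)) auto
    also have "\<dots> \<le> q * (\<delta> / 2) + C * \<epsilon>"
      using x q a[OF s] N_props(1)
      by (intro add_mono mult_left_mono) (auto simp: K_def dist_norm)
    also have "\<dots> = \<delta> / 2"
      using N_props(1) by (simp add: \<epsilon>_def field_simps)
    finally show ?thesis
      by (simp add: K_def)
  qed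
  ultimately obtain g where g: "continuous_on (ball s\<^sub>0 a) g"
    "\<And>s. s \<in> ball s\<^sub>0 a \<Longrightarrow> g s \<in> K" "\<And>s. s \<in> ball s\<^sub>0 a \<Longrightarrow> f (g s, Lam s) = g s"
  proof (rule continuous_fixed_point_branch[OF N q, of K x\<^sub>0 "ball s\<^sub>0 a" "\<lambda>s x. f (x, Lam s)"])
    show "N (f (x, Lam s) - f (x', Lam s)) \<le> q * N (x - x')"
      if "s \<in> ball s\<^sub>0 a" "x \<in> K" "x' \<in> K" for s x x'
      using contr a K_cball that by blast
    show "continuous_on (ball s\<^sub>0 a) (\<lambda>s. f (x, Lam s))" for x
      using cont by (rule continuous_on_subset) simp
  qed auto
  have "branch_box (\<lambda>s x. f (x, Lam s) = x) (ball s\<^sub>0 a) (ball x\<^sub>0 \<delta>) g"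
    unfolding branch_box_def
  proof (intro conjI ballI impI)
    fix s x assume s: "s \<in> ball s\<^sub>0 a" and x: "x \<in> ball x\<^sub>0 \<delta>" "f (x, Lam s) = x"
    have "N (f (x, Lam s) - f (g s, Lam s)) \<le> q * N (x - g s)"
      by (rule contr) (use a[OF s] g(2)[OF s] K_cball x(1) in auto)
    then have "x - g s = 0"
      using x(2) g(3)[OF s] by (intro equivalent_norm_contracted_eq_0[OF N q(2)]) simp
    then show "x = g s"
      by simp
  next
    fix s assume "s \<in> ball s\<^sub>0 a"
    then show "g s \<in> ball x\<^sub>0 \<delta>" "f (g s, Lam s) = g s"
      using g(2,3) K_half \<open>0 < \<delta>\<close> by fastforce+
  qed (simp_all add: g(1) is_interval_ball_real)
  then show ?thesis
    using that \<open>0 < a\<close> \<open>0 < \<delta>\<close> by simp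
qed

definition good_branch :: "(real \<Rightarrow> 'a::topological_space \<Rightarrow> bool) \<Rightarrow> real set \<Rightarrow> (real \<Rightarrow> 'a) \<Rightarrow> bool"
  where "good_branch P J h \<longleftrightarrow> open J \<and> is_interval J \<and> continuous_on J h
    \<and> (\<forall>t\<in>J. P t (h t) \<and> (\<exists>I V g. branch_box P I V g \<and> t \<in> I \<and> h t \<in> V))"

lemma branch_box_good_branch: "branch_box P I V g \<Longrightarrow> good_branch P I g"
  unfolding good_branch_def branch_box_def by blast

lemma good_branches_agree:
  fixes h\<^sub>1 h\<^sub>2 :: "real \<Rightarrow> 'a::metric_space"
  assumes b1: "good_branch P J\<^sub>1 h\<^sub>1" and b2: "good_branch P J\<^sub>2 h\<^sub>2"
    and t\<^sub>0: "t\<^sub>0 \<in> J\<^sub>1 \<inter> J\<^sub>2" "h\<^sub>1 t\<^sub>0 = h\<^sub>2 t\<^sub>0" and t: "t \<in> J\<^sub>1 \<inter> J\<^sub>2"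
  shows "h\<^sub>1 t = h\<^sub>2 t"
proof -
  define S where "S = J\<^sub>1 \<inter> J\<^sub>2"
  have S: "open S" "connected S"
    using b1 b2 unfolding S_def good_branch_def
    by (auto simp: is_interval_connected_1[symmetric] intro: is_interval_Int)
  have h: "continuous_on S h\<^sub>1" "continuous_on S h\<^sub>2"
    using b1 b2 unfolding S_def good_branch_def by (auto intro: continuous_on_subset)
  \<comment> \<open>Agreement is locally constant: near a point of agreement both branches follow the
    same box, and disagreement persists by continuity.\<close>
  have "\<exists>T. openin (top_of_set S) T \<and> a \<in> T \<and> (\<forall>x\<in>T. \<forall>y\<in>T. h\<^sub>1 x = h\<^sub>2 x \<longrightarrow> h\<^sub>1 y = h\<^sub>2 y)"
    if a: "a \<in> S" for a
  proof (cases "h\<^sub>1 a = h\<^sub>2 a")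
    case True
    obtain I V g where box: "branch_box P I V g" "a \<in> I" "h\<^sub>1 a \<in> V"
      using b1 a unfolding good_branch_def S_def by blast
    define A\<^sub>1 where "A\<^sub>1 = h\<^sub>1 -` V \<inter> S"
    define A\<^sub>2 where "A\<^sub>2 = h\<^sub>2 -` V \<inter> S"
    define T where "T = S \<inter> I \<inter> A\<^sub>1 \<inter> A\<^sub>2"
    have "open A\<^sub>1" "open A\<^sub>2"
      using box(1) h S(1) unfolding A\<^sub>1_def A\<^sub>2_def branch_box_def by (auto simp: continuous_on_open_vimage)
    then have "open T"
      using box(1) S(1) unfolding T_def branch_box_def by (intro open_Int) auto
    then have "openin (top_of_set S) T"
      unfolding openin_open_eq[OF S(1)] T_def by blast
    moreover have "a \<in> T"
      using a box(2,3) True unfolding T_def A\<^sub>1_def A\<^sub>2_def by auto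
    moreover have "h\<^sub>1 u = h\<^sub>2 u" if "u \<in> T" for u
    proof -
      have "h\<^sub>1 u = g u" "h\<^sub>2 u = g u"
        using that b1 b2 box(1) unfolding T_def A\<^sub>1_def A\<^sub>2_def S_def good_branch_def branch_box_def
        by blast+
      then show ?thesis
        by simp
    qed
    ultimately show ?thesis
      by blast
  next
    case False
    define T where "T = (\<lambda>u. dist (h\<^sub>1 u) (h\<^sub>2 u)) -` {0<..} \<inter> S"
    have "open T"
      using S(1) h unfolding T_def by (intro continuous_on_open_vimage[THEN iffD1, rule_format])
        (auto intro: continuous_on_dist)
    then show ?thesis
      using False a by (intro exI[of _ T]) (auto simp: openin_open_eq[OF S(1)] T_def)
  qed
  then show ?thesis
    using connected_induction_simple[OF S(2), of t\<^sub>0 t "\<lambda>u. h\<^sub>1 u = h\<^sub>2 u"] t\<^sub>0 t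
    unfolding S_def by blast
qed

lemma good_branch_glue:
  fixes h\<^sub>1 h\<^sub>2 :: "real \<Rightarrow> 'a::metric_space"
  assumes b1: "good_branch P J\<^sub>1 h\<^sub>1" and b2: "good_branch P J\<^sub>2 h\<^sub>2"
    and t\<^sub>0: "t\<^sub>0 \<in> J\<^sub>1 \<inter> J\<^sub>2" "h\<^sub>1 t\<^sub>0 = h\<^sub>2 t\<^sub>0"
  shows "good_branch P (J\<^sub>1 \<union> J\<^sub>2) (\<lambda>t. if t \<in> J\<^sub>1 then h\<^sub>1 t else h\<^sub>2 t)"
proof -
  let ?h = "\<lambda>t. if t \<in> J\<^sub>1 then h\<^sub>1 t else h\<^sub>2 t"
  have J: "open J\<^sub>1" "open J\<^sub>2" "is_interval J\<^sub>1" "is_interval J\<^sub>2"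
    using b1 b2 by (simp_all add: good_branch_def)
  have "continuous_on J\<^sub>1 ?h"
    using b1 unfolding good_branch_def by (auto intro: continuous_on_cong[THEN iffD1, rotated 2])
  moreover have "continuous_on J\<^sub>2 ?h"
    using b2 good_branches_agree[OF b1 b2 t\<^sub>0] unfolding good_branch_def
    by (auto intro: continuous_on_cong[THEN iffD1, rotated 2])
  moreover have "is_interval (J\<^sub>1 \<union> J\<^sub>2)"
    using J t\<^sub>0(1) unfolding is_interval_connected_1 by (intro connected_Un) auto
  ultimately show ?thesis
    using b1 b2 J unfolding good_branch_def by (auto intro: continuous_on_open_Un)
qed

lemma continuous_if_connected_graph_in_branch_boxes:
  fixes X :: "real \<Rightarrow> 'a::metric_space"
  assumes conn: "connected (range (\<lambda>s. (s, X s)))" and PX: "\<And>s. P s (X s)"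
    and box: "\<And>s. \<exists>I V g. branch_box P I V g \<and> s \<in> I \<and> X s \<in> V"
  shows "continuous_on UNIV X"
proof -
  define R where "R p p' \<longleftrightarrow> (\<exists>J h. good_branch P J h \<and> fst p \<in> J \<and> fst p' \<in> J
    \<and> h (fst p) = snd p \<and> h (fst p') = snd p')" for p p' :: "real \<times> 'a"
  have box_eq: "X t = g t" if "branch_box P I V g" "t \<in> I" "X t \<in> V" for I V g t
    using that PX unfolding branch_box_def by blast
  have R: "R (s, X s) (t, X t)" for s t
  proof (rule connected_equivalence_relation[OF conn])
    fix p p' p'' assume "R p p'" "R p' p''"
    then obtain J\<^sub>1 h\<^sub>1 J\<^sub>2 h\<^sub>2 where b: "good_branch P J\<^sub>1 h\<^sub>1" "good_branch P J\<^sub>2 h\<^sub>2"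
      and p: "fst p \<in> J\<^sub>1" "fst p' \<in> J\<^sub>1 \<inter> J\<^sub>2" "fst p'' \<in> J\<^sub>2" "h\<^sub>1 (fst p) = snd p"
      "h\<^sub>1 (fst p') = h\<^sub>2 (fst p')" "h\<^sub>2 (fst p'') = snd p''"
      unfolding R_def by (metis IntI)
    have "(if fst p'' \<in> J\<^sub>1 then h\<^sub>1 (fst p'') else h\<^sub>2 (fst p'')) = snd p''"
      using good_branches_agree[OF b p(2,5)] p(3,6) by auto
    then show "R p p''"
      unfolding R_def using good_branch_glue[OF b p(2,5)] p(1,3,4)
      by (intro exI[of _ "J\<^sub>1 \<union> J\<^sub>2"] exI[of _ "\<lambda>t. if t \<in> J\<^sub>1 then h\<^sub>1 t else h\<^sub>2 t"]) auto
  next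
    fix a assume "a \<in> range (\<lambda>s. (s, X s))"
    then obtain s where a: "a = (s, X s)" by blast
    obtain I V g where g: "branch_box P I V g" "s \<in> I" "X s \<in> V"
      using box by blast
    have "open I" "open V"
      using g(1) by (simp_all add: branch_box_def)
    then have "openin (top_of_set (range (\<lambda>s. (s, X s)))) (range (\<lambda>s. (s, X s)) \<inter> I \<times> V)"
      by (intro openin_open_Int open_Times)
    moreover have "R a x" if "x \<in> range (\<lambda>s. (s, X s)) \<inter> I \<times> V" for x
    proof -
      from that obtain t where x: "x = (t, X t)"
        by blast
      with that have "t \<in> I" "X t \<in> V"
        by auto
      show ?thesis
        unfolding R_def a x using branch_box_good_branch[OF g(1)] g box_eq[OF g(1)] \<open>t \<in> I\<close> \<open>X t \<in> V\<close>
        by (intro exI[of _ I] exI[of _ g]) auto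
    qed
    ultimately show "\<exists>T. openin (top_of_set (range (\<lambda>s. (s, X s)))) T \<and> a \<in> T \<and> (\<forall>x\<in>T. R a x)"
      using a g by blast
  qed (auto simp: R_def)
  have "isCont X s" for s
  proof -
    obtain I V g where g: "branch_box P I V g" "s \<in> I" "X s \<in> V"
      using box by blast
    have "X t = g t" if "t \<in> I" for t
    proof -
      obtain J h where "good_branch P J h" "s \<in> J" "t \<in> J" "h s = X s" "h t = X t"
        using R[of s t] unfolding R_def by auto
      then show ?thesis
        using good_branches_agree[OF _ branch_box_good_branch[OF g(1)], of J h s t] that g box_eq
        by auto
    qed
    moreover have "open I" "continuous_on I g"
      using g(1) by (simp_all add: branch_box_def)
    ultimately show ?thesis
      using g(2) by (metis continuous_on_cong continuous_on_eq_continuous_at)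
  qed
  then show ?thesis
    by (simp add: continuous_at_imp_continuous_on)
qed

definition contracts_near_path ::
  "('a::real_normed_vector \<times> 'p \<Rightarrow> 'a) \<Rightarrow> (real \<Rightarrow> 'p) \<Rightarrow> (real \<Rightarrow> 'a) \<Rightarrow> real set
     \<Rightarrow> ('a \<Rightarrow> real) \<Rightarrow> real \<Rightarrow> real \<Rightarrow> real \<Rightarrow> bool" where
  "contracts_near_path f Lam X S N C q \<delta> \<longleftrightarrow> equivalent_norm N C \<and> 0 \<le> q \<and> q < 1 \<and> 0 < \<delta> \<and>
     (\<forall>s\<in>S. \<forall>x x'. norm (x - X s) \<le> \<delta> \<longrightarrow> norm (x' - X s) \<le> \<delta> \<longrightarrow>
        N (f (x, Lam s) - f (x', Lam s)) \<le> q * N (x - x'))"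

lemma contracts_near_path_subset:
  "contracts_near_path f Lam X S N C q \<delta> \<Longrightarrow> S' \<subseteq> S \<Longrightarrow> contracts_near_path f Lam X S' N C q \<delta>"
  unfolding contracts_near_path_def by blast

lemma eventually_contracts_near_path:
  fixes f :: "(real^'l) \<times> (real^'m) \<Rightarrow> real^'l"
  assumes f: "C1_map f" and sr: "spectral_radius_r (matrix (Dx f x\<^sub>0 \<mu>\<^sub>0)) < 1"
    and Lam: "(Lam \<longlongrightarrow> \<mu>\<^sub>0) F" and X: "(X \<longlongrightarrow> x\<^sub>0) F"
  obtains S N C q \<delta> where "eventually (\<lambda>s. s \<in> S) F" "contracts_near_path f Lam X S N C q \<delta>"
proof -
  obtain N C q \<delta> where N: "equivalent_norm N C" and q: "0 \<le> q" "q < 1" and "0 < \<delta>"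
    and contr: "\<And>\<mu> x x'. dist \<mu> \<mu>\<^sub>0 < \<delta> \<Longrightarrow> x \<in> cball x\<^sub>0 \<delta> \<Longrightarrow> x' \<in> cball x\<^sub>0 \<delta> \<Longrightarrow>
       N (f (x, \<mu>) - f (x', \<mu>)) \<le> q * N (x - x')"
    using C1_map_local_contraction[OF f sr] by blast
  define S where "S = {s. dist (Lam s) \<mu>\<^sub>0 < \<delta> \<and> dist (X s) x\<^sub>0 < \<delta> / 2}"
  have "eventually (\<lambda>s. dist (Lam s) \<mu>\<^sub>0 < \<delta>) F"
    using tendstoD[OF Lam \<open>0 < \<delta>\<close>] .
  moreover have "eventually (\<lambda>s. dist (X s) x\<^sub>0 < \<delta> / 2) F"
    by (rule tendstoD[OF X]) (use \<open>0 < \<delta>\<close> in simp)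
  ultimately have "eventually (\<lambda>s. s \<in> S) F"
    unfolding S_def mem_Collect_eq by (rule eventually_conj)
  moreover have "x \<in> cball x\<^sub>0 \<delta>" if "s \<in> S" "norm (x - X s) \<le> \<delta> / 2" for s x
    using that dist_triangle[of x\<^sub>0 x "X s"] by (auto simp: S_def dist_norm norm_minus_commute)
  then have "contracts_near_path f Lam X S N C q (\<delta> / 2)"
    unfolding contracts_near_path_def using N q \<open>0 < \<delta>\<close> contr by (auto simp: S_def)
  ultimately show ?thesis
    using that by blast
qed

lemma grid_index:
  fixes a b e :: real
  assumes "a < b" "0 < e"
  obtains idx :: "real \<Rightarrow> nat" and K :: nat where "mono idx" "\<And>s. idx s \<le> K"
    "{s. idx s = 0} \<subseteq> {..a}" "{s. idx s = K} \<subseteq> {b..}"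
    "\<And>i. 0 < i \<Longrightarrow> i < K \<Longrightarrow> \<exists>c\<in>{a..b}. {s. idx s = i} \<subseteq> ball c e"
proof -
  define M where "M = nat \<lceil>(b - a) / e\<rceil> + 1"
  define h where "h = (b - a) / M"
  have "0 < M"
    by (simp add: M_def)
  then have "0 < h"
    unfolding h_def using assms by (intro divide_pos_pos) auto
  have "(b - a) / e < M"
    unfolding M_def by linarith
  then have "h < e"
    using assms \<open>0 < M\<close> by (simp add: h_def field_simps)
  define idx where "idx s = nat (min (int M + 1) (\<lfloor>(s - a) / h\<rfloor> + 1))" for s
  have "mono idx"
    unfolding idx_def using \<open>0 < h\<close>
    by (intro monoI nat_mono min.mono order_refl add_right_mono floor_mono divide_right_mono) auto
  moreover have "idx s \<le> M + 1" for s
    by (simp add: idx_def)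
  moreover have "s \<le> a" if "idx s = 0" for s
  proof -
    have "\<lfloor>(s - a) / h\<rfloor> + 1 \<le> 0"
      using that by (simp add: idx_def min_le_iff_disj)
    then have "\<lfloor>(s - a) / h\<rfloor> < 0"
      by linarith
    then have "(s - a) / h < 0"
      by simp
    then show ?thesis
      using \<open>0 < h\<close> by (simp add: divide_less_0_iff)
  qed
  moreover have "b \<le> s" if "idx s = M + 1" for s
  proof -
    have "int M \<le> \<lfloor>(s - a) / h\<rfloor>"
      using that by (auto simp: idx_def)
    then have "real M * h \<le> s - a"
      using \<open>0 < h\<close> by (simp add: le_floor_iff field_simps)
    then show ?thesis
      using \<open>0 < M\<close> by (simp add: h_def)
  qed
  moreover have "\<exists>c\<in>{a..b}. {s. idx s = i} \<subseteq> ball c e" if "0 < i" "i < M + 1" for i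
  proof
    have "(real i - 1) * h \<le> M * h"
      using that \<open>0 < h\<close> by (intro mult_right_mono) auto
    moreover have "M * h = b - a"
      using \<open>0 < M\<close> by (simp add: h_def)
    ultimately show "a + (real i - 1) * h \<in> {a..b}"
      using that \<open>0 < h\<close> by auto
    show "{s. idx s = i} \<subseteq> ball (a + (real i - 1) * h) e"
    proof
      fix s assume "s \<in> {s. idx s = i}"
      then have "\<lfloor>(s - a) / h\<rfloor> = int i - 1"
        using that by (auto simp: idx_def)
      then have "real i - 1 \<le> (s - a) / h" "(s - a) / h < i"
        unfolding floor_eq_iff by auto
      then have "(real i - 1) * h \<le> s - a" "s - a < i * h"
        using \<open>0 < h\<close> by (simp_all add: pos_le_divide_eq pos_divide_less_eq)
      then show "s \<in> ball (a + (real i - 1) * h) e"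
        using \<open>h < e\<close> that by (auto simp: dist_real_def of_nat_diff algebra_simps)
    qed
  qed
  ultimately show ?thesis
    using that[of idx "M + 1"] by auto
qed

lemma monotone_partition:
  fixes P :: "real set \<Rightarrow> bool"
  assumes subset: "\<And>S S'. P S \<Longrightarrow> S' \<subseteq> S \<Longrightarrow> P S'"
    and local: "\<And>s. \<exists>U. open U \<and> s \<in> U \<and> P U"
    and bot: "P {..a}" and top: "P {b..}"
  obtains idx :: "real \<Rightarrow> nat" and K :: nat where "mono idx" "\<And>s. idx s \<le> K" "\<And>i. P {s. idx s = i}"
proof -
  let ?b = "max b (a + 1)"
  have cover: "{a..?b} \<subseteq> \<Union>{U. open U \<and> P U}"
  proof
    fix s
    obtain U where "open U" "s \<in> U" "P U"
      using local by blast
    then show "s \<in> \<Union>{U. open U \<and> P U}"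
      by blast
  qed
  obtain e where "0 < e" and e: "\<And>x. x \<in> {a..?b} \<Longrightarrow> \<exists>G\<in>{U. open U \<and> P U}. ball x e \<subseteq> G"
  proof (rule Heine_Borel_lemma[OF compact_Icc cover])
    fix \<epsilon> :: real
    assume "0 < \<epsilon>" "\<And>x. x \<in> {a..?b} \<Longrightarrow> \<exists>G\<in>{U. open U \<and> P U}. ball x \<epsilon> \<subseteq> G"
    then show thesis
      by (rule that)
  qed simp
  show ?thesis
  proof (rule grid_index[of a ?b e, OF _ \<open>0 < e\<close>])
    fix idx :: "real \<Rightarrow> nat" and K :: nat
    assume idx: "mono idx" "\<And>s. idx s \<le> K" "{s. idx s = 0} \<subseteq> {..a}" "{s. idx s = K} \<subseteq> {?b..}"
      "\<And>i. 0 < i \<Longrightarrow> i < K \<Longrightarrow> \<exists>c\<in>{a..?b}. {s. idx s = i} \<subseteq> ball c e"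
    have "P {s. idx s = i}" for i
    proof -
      consider "i = 0" | "i = K" | "0 < i" "i < K" | "K < i"
        using nat_neq_iff[of i K] by (cases "i = 0") auto
      then show ?thesis
      proof cases
        case 1
        then show ?thesis
          using subset[OF bot idx(3)] by simp
      next
        case 2
        have "{s. idx s = i} \<subseteq> {b..}"
          using idx(4) 2 by auto
        then show ?thesis
          by (rule subset[OF top])
      next
        case 3
        then obtain c where "c \<in> {a..?b}" "{s. idx s = i} \<subseteq> ball c e"
          using idx(5) by blast
        moreover obtain U where "P U" "ball c e \<subseteq> U"
          using e[OF \<open>c \<in> {a..?b}\<close>] by auto
        ultimately have "{s. idx s = i} \<subseteq> U"
          by blast
        then show ?thesis
          by (rule subset[OF \<open>P U\<close>])
      next
        case 4
        then have "{s. idx s = i} = {}"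
          using idx(2) leD by blast
        then show ?thesis
          using subset[OF bot] by simp
      qed
    qed
    then show ?thesis
      by (rule that[OF idx(1,2)])
  qed simp
qed

lemma mono_nat_eventually_constant_at_bot:
  fixes idx :: "real \<Rightarrow> nat"
  assumes "mono idx" "\<And>s. idx s \<le> K"
  obtains a i where "\<And>s. s \<le> a \<Longrightarrow> idx s = i"
proof -
  have "finite (range idx)" "range idx \<noteq> {}"
    using assms(2) by (auto intro: finite_subset[of _ "{..K}"])
  then have "Min (range idx) \<in> range idx"
    by (rule Min_in)
  then obtain a where "idx a = Min (range idx)"
    by (metis rangeE)
  then have "idx s = idx a" if "s \<le> a" for s
    using monoD[OF assms(1) that] Min_le[OF \<open>finite (range idx)\<close>, of "idx s"] by simp
  then show ?thesis
    using that by blast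
qed

lemma switching_radii:
  fixes C q \<rho> :: "nat \<Rightarrow> real"
  assumes C: "\<And>i. i \<le> K \<Longrightarrow> 1 \<le> C i" and q: "\<And>i. i \<le> K \<Longrightarrow> q i < 1"
    and \<rho>: "\<And>i. i \<le> K \<Longrightarrow> 0 < \<rho> i"
  obtains R D where "0 < D" "\<And>i. i \<le> K \<Longrightarrow> 0 < R i" "\<And>i. i \<le> K \<Longrightarrow> R i \<le> \<rho> i"
    "\<And>i j. i < j \<Longrightarrow> j \<le> K \<Longrightarrow> R i * C j \<le> R j" "\<And>i. i \<le> K \<Longrightarrow> C i * D \<le> (1 - q i) * R i"
proof -
  \<comment> \<open>Radii growing geometrically with ratio \<open>C\<^sub>m\<^sub>a\<^sub>x\<close> absorb every change of norm.\<close>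
  define Cmax where "Cmax = Max (C ` {..K})"
  define qmax where "qmax = Max (q ` {..K})"
  define R\<^sub>0 where "R\<^sub>0 = Min (\<rho> ` {..K}) / Cmax ^ K"
  define R where "R i = R\<^sub>0 * Cmax ^ i" for i
  define D where "D = (1 - qmax) * R\<^sub>0 / Cmax"
  have Cmax: "C i \<le> Cmax" "1 \<le> Cmax" if "i \<le> K" for i
    using C that by (auto simp: Cmax_def intro: Max_ge order_trans[OF _ Max_ge])
  have qmax: "q i \<le> qmax" "qmax < 1" if "i \<le> K" for i
    using q that Max_in[of "q ` {..K}"] by (auto simp: qmax_def)
  have "0 < Min (\<rho> ` {..K})"
    using \<rho> Min_in[of "\<rho> ` {..K}"] by auto
  then have R\<^sub>0: "0 < R\<^sub>0"
    using Cmax[of 0] by (simp add: R\<^sub>0_def)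
  have R_mono: "R i \<le> R j" if "i \<le> j" for i j
    using that R\<^sub>0 Cmax[of 0] by (simp add: R_def power_increasing)
  show ?thesis
  proof
    show "0 < D"
      using R\<^sub>0 Cmax[of 0] qmax[of 0] by (simp add: D_def)
    show "0 < R i" for i
      using R\<^sub>0 Cmax[of 0] by (simp add: R_def)
    show "R i \<le> \<rho> i" if "i \<le> K" for i
    proof -
      have "R i \<le> R K"
        using R_mono that .
      also have "\<dots> = Min (\<rho> ` {..K})"
        using Cmax[of 0] by (simp add: R_def R\<^sub>0_def)
      also have "\<dots> \<le> \<rho> i"
        using that by (simp add: Min_le)
      finally show ?thesis .
    qed
    show "R i * C j \<le> R j" if "i < j" "j \<le> K" for i j
    proof -
      have "R i * C j \<le> R i * Cmax"
        using Cmax[OF that(2)] R\<^sub>0 by (simp add: R_def)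
      also have "\<dots> = R (Suc i)"
        by (simp add: R_def)
      finally show ?thesis
        using R_mono[of "Suc i" j] that by simp
    qed
    show "C i * D \<le> (1 - q i) * R i" if "i \<le> K" for i
    proof -
      have "C i * D \<le> Cmax * D"
        using Cmax[OF that] R\<^sub>0 qmax[OF that] by (intro mult_right_mono) (auto simp: D_def)
      also have "\<dots> = (1 - qmax) * R 0"
        using Cmax[OF that] by (simp add: D_def R_def)
      also have "\<dots> \<le> (1 - q i) * R i"
        using qmax[OF that] R_mono[of 0 i] R\<^sub>0 by (intro mult_mono) (auto simp: R_def)
      finally show ?thesis .
    qed
  qed
qed

lemma uniformly_continuous_if_tendsto_at_top_at_bot:
  fixes X :: "real \<Rightarrow> 'a::metric_space"
  assumes "continuous_on UNIV X" "(X \<longlongrightarrow> x\<^sub>p) at_top" "(X \<longlongrightarrow> x\<^sub>m) at_bot"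
  shows "uniformly_continuous_on UNIV X"
  unfolding uniformly_continuous_on_def
proof (intro allI impI)
  fix \<epsilon> :: real assume "0 < \<epsilon>"
  then obtain T\<^sub>p where T\<^sub>p: "\<And>s. T\<^sub>p \<le> s \<Longrightarrow> dist (X s) x\<^sub>p < \<epsilon> / 2"
    using tendstoD[OF assms(2), of "\<epsilon> / 2"] by (auto simp: eventually_at_top_linorder)
  obtain T\<^sub>m where T\<^sub>m: "\<And>s. s \<le> T\<^sub>m \<Longrightarrow> dist (X s) x\<^sub>m < \<epsilon> / 2"
    using tendstoD[OF assms(3), of "\<epsilon> / 2"] \<open>0 < \<epsilon>\<close> by (auto simp: eventually_at_bot_linorder)
  have "uniformly_continuous_on {T\<^sub>m - 1 .. T\<^sub>p + 1} X"
    using assms(1) by (intro compact_uniformly_continuous) (auto intro: continuous_on_subset)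
  from this[unfolded uniformly_continuous_on_def, rule_format, OF \<open>0 < \<epsilon>\<close>]
  obtain d where "0 < d"
    and d: "\<And>s s'. s \<in> {T\<^sub>m - 1 .. T\<^sub>p + 1} \<Longrightarrow> s' \<in> {T\<^sub>m - 1 .. T\<^sub>p + 1} \<Longrightarrow> dist s' s < d \<Longrightarrow> dist (X s') (X s) < \<epsilon>"
    by blast
  have "dist (X s') (X s) < \<epsilon>" if "dist s' s < min 1 d" for s s'
  proof (cases "s \<in> {T\<^sub>m - 1 .. T\<^sub>p + 1} \<and> s' \<in> {T\<^sub>m - 1 .. T\<^sub>p + 1}")
    case True
    then show ?thesis
      using d that by simp
  next
    case False
    then have "(T\<^sub>p \<le> s \<and> T\<^sub>p \<le> s') \<or> (s \<le> T\<^sub>m \<and> s' \<le> T\<^sub>m)"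
      using that by (auto simp: dist_real_def)
    then show ?thesis
      by (auto intro: dist_triangle_half_l[of _ x\<^sub>p] dist_triangle_half_l[of _ x\<^sub>m] T\<^sub>p T\<^sub>m)
  qed
  then show "\<exists>d>0. \<forall>s\<in>UNIV. \<forall>s'\<in>UNIV. dist s' s < d \<longrightarrow> dist (X s') (X s) < \<epsilon>"
    using \<open>0 < d\<close> by (intro exI[of _ "min 1 d"]) auto
qed

primrec forward_orbit :: "(int \<Rightarrow> 'a \<Rightarrow> 'a) \<Rightarrow> int \<Rightarrow> 'a \<Rightarrow> nat \<Rightarrow> 'a" where
  "forward_orbit F m x 0 = x"
| "forward_orbit F m x (Suc k) = F (m + int k) (forward_orbit F m x k)"

definition pullback_orbit :: "(int \<Rightarrow> 'a \<Rightarrow> 'a) \<Rightarrow> (int \<Rightarrow> 'a) \<Rightarrow> nat \<Rightarrow> int \<Rightarrow> 'a" where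
  "pullback_orbit F p k n = forward_orbit F (- int k) (p (- int k)) (nat (n + int k))"

lemma pullback_orbit_start: "pullback_orbit F p k (- int k) = p (- int k)"
  by (simp add: pullback_orbit_def)

lemma pullback_orbit_step:
  assumes "- int k \<le> n"
  shows "pullback_orbit F p k (n + 1) = F n (pullback_orbit F p k n)"
proof -
  have "nat (n + 1 + int k) = Suc (nat (n + int k))" "- int k + int (nat (n + int k)) = n"
    using assms by simp_all
  then show ?thesis
    by (simp add: pullback_orbit_def)
qed

lemma pullback_orbit_in_tubes:
  assumes maps: "\<And>n x. x \<in> T n \<Longrightarrow> F n x \<in> T (n + 1)" and start: "\<And>n. p n \<in> T n"
  shows "- int k \<le> n \<Longrightarrow> pullback_orbit F p k n \<in> T n"
proof (induction n rule: int_ge_induct)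
  case base
  then show ?case
    using start by (simp add: pullback_orbit_start)
next
  case (step n)
  then show ?case
    using maps by (simp add: pullback_orbit_step)
qed

text \<open>Orbits started at earlier and earlier times contract towards each other while they run
  through the contracting region, so they converge to an entire orbit.\<close>
lemma pullback_orbit_Cauchy:
  fixes F :: "int \<Rightarrow> 'a::banach \<Rightarrow> 'a"
  assumes maps: "\<And>n x. x \<in> T n \<Longrightarrow> F n x \<in> T (n + 1)" and start: "\<And>n. p n \<in> T n"
    and N: "\<And>v. norm v \<le> N v" and q: "0 \<le> q" "q < 1"
    and contr: "\<And>n x x'. n \<le> n\<^sub>1 \<Longrightarrow> x \<in> T n \<Longrightarrow> x' \<in> T n \<Longrightarrow> N (F n x - F n x') \<le> q * N (x - x')"
    and diam: "\<And>n x x'. n \<le> n\<^sub>1 \<Longrightarrow> x \<in> T n \<Longrightarrow> x' \<in> T n \<Longrightarrow> N (x - x') \<le> B"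
    and "n \<le> n\<^sub>1"
  shows "Cauchy (\<lambda>k. pullback_orbit F p k n)"
proof -
  note in_tubes = pullback_orbit_in_tubes[where T = T and F = F and p = p, OF maps start]
  have estimate: "n \<le> n\<^sub>1 \<longrightarrow>
      N (pullback_orbit F p k' n - pullback_orbit F p k n) \<le> q ^ nat (n + int k) * B"
    if "k \<le> k'" "- int k \<le> n" for k k' n
    using that(2)
  proof (induction n rule: int_ge_induct)
    case base
    show ?case
      using diam in_tubes that by simp
  next
    case (step n)
    show ?case
    proof
      assume "n + 1 \<le> n\<^sub>1"
      then have "N (pullback_orbit F p k' (n + 1) - pullback_orbit F p k (n + 1))
          \<le> q * N (pullback_orbit F p k' n - pullback_orbit F p k n)"
        using step(1) \<open>k \<le> k'\<close> by (simp add: pullback_orbit_step contr in_tubes)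
      also have "\<dots> \<le> q * (q ^ nat (n + int k) * B)"
        using step(2) \<open>n + 1 \<le> n\<^sub>1\<close> q by (intro mult_left_mono) auto
      also have "\<dots> = q ^ Suc (nat (n + int k)) * B"
        by simp
      also have "Suc (nat (n + int k)) = nat (n + 1 + int k)"
        using step(1) by simp
      finally show "N (pullback_orbit F p k' (n + 1) - pullback_orbit F p k (n + 1))
          \<le> q ^ nat (n + 1 + int k) * B" .
    qed
  qed
  have "0 \<le> B"
    using diam[OF order_refl start start] N[of 0] by simp
  show ?thesis
    unfolding Cauchy_altdef
  proof (intro allI impI)
    fix e :: real assume "0 < e"
    then obtain j where j: "q ^ j * (B + 1) < e"
      using real_arch_pow_inv[of "e / (B + 1)" q] q \<open>0 \<le> B\<close> by (auto simp: field_simps)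
    have "dist (pullback_orbit F p k n) (pullback_orbit F p k' n) < e"
      if "j + nat (- n) \<le> k" "k < k'" for k k'
    proof -
      have "- int k \<le> n"
        using that(1) nat_le_iff[of "- n" k] by linarith
      have "dist (pullback_orbit F p k n) (pullback_orbit F p k' n)
          \<le> N (pullback_orbit F p k' n - pullback_orbit F p k n)"
        using N by (simp add: dist_norm norm_minus_commute)
      also have "\<dots> \<le> q ^ nat (n + int k) * B"
        using estimate[of k k' n] \<open>- int k \<le> n\<close> that(2) \<open>n \<le> n\<^sub>1\<close> by simp
      also have "\<dots> \<le> q ^ j * (B + 1)"
        using that q \<open>0 \<le> B\<close> by (intro mult_mono power_decreasing) auto
      finally show ?thesis
        using j by linarith
    qed
    then show "\<exists>M. \<forall>k\<ge>M. \<forall>k'>k. dist (pullback_orbit F p k n) (pullback_orbit F p k' n) < e"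
      by blast
  qed
qed

lemma pullback_entire_orbit:
  fixes F :: "int \<Rightarrow> 'a::banach \<Rightarrow> 'a"
  assumes cont: "\<And>n. continuous_on UNIV (F n)" and closed: "\<And>n. closed (T n)"
    and maps: "\<And>n x. x \<in> T n \<Longrightarrow> F n x \<in> T (n + 1)" and start: "\<And>n. p n \<in> T n"
    and N: "\<And>v. norm v \<le> N v" and q: "0 \<le> q" "q < 1"
    and contr: "\<And>n x x'. n \<le> n\<^sub>1 \<Longrightarrow> x \<in> T n \<Longrightarrow> x' \<in> T n \<Longrightarrow> N (F n x - F n x') \<le> q * N (x - x')"
    and diam: "\<And>n x x'. n \<le> n\<^sub>1 \<Longrightarrow> x \<in> T n \<Longrightarrow> x' \<in> T n \<Longrightarrow> N (x - x') \<le> B"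
  obtains y where "\<And>n. y (n + 1) = F n (y n)" "\<And>n. y n \<in> T n"
proof -
  let ?z = "pullback_orbit F p"
  have eventually_started: "eventually (\<lambda>k. - int k \<le> n) sequentially" for n
    by (rule eventually_sequentiallyI[of "nat (- n)"]) linarith
  have limit_step: "(\<lambda>k. ?z k (n + 1)) \<longlonglongrightarrow> F n l" if "(\<lambda>k. ?z k n) \<longlonglongrightarrow> l" for n l
  proof (rule Lim_transform_eventually)
    show "(\<lambda>k. F n (?z k n)) \<longlonglongrightarrow> F n l"
      using cont that by (rule continuous_on_tendsto_compose) simp_all
    show "eventually (\<lambda>k. F n (?z k n) = ?z k (n + 1)) sequentially"
      using eventually_started[of n] by (rule eventually_mono) (simp add: pullback_orbit_step)
  qed
  have "convergent (\<lambda>k. ?z k n)" for n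
  proof (cases "n \<le> n\<^sub>1")
    case True
    then show ?thesis
      using maps start N q contr diam True by (intro Cauchy_convergent) (rule pullback_orbit_Cauchy)
  next
    case False
    then have "n\<^sub>1 \<le> n"
      by simp
    then show ?thesis
    proof (induction n rule: int_ge_induct)
      case base
      show ?case
        using maps start N q contr diam order_refl by (intro Cauchy_convergent) (rule pullback_orbit_Cauchy)
    next
      case (step n)
      then show ?case
        using limit_step by (auto simp: convergent_def)
    qed
  qed
  then obtain y where y: "\<And>n. (\<lambda>k. ?z k n) \<longlonglongrightarrow> y n"
    unfolding convergent_def by metis
  show ?thesis
  proof (rule that)
    show "y (n + 1) = F n (y n)" for n
      using LIMSEQ_unique[OF y limit_step[OF y]] .
    show "y n \<in> T n" for n
    proof (rule Lim_in_closed_set[OF closed _ _ y])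
      show "eventually (\<lambda>k. ?z k n \<in> T n) sequentially"
        using eventually_started[of n] by (rule eventually_mono) (use maps start in \<open>rule pullback_orbit_in_tubes\<close>)
    qed simp
  qed
qed

lemma tube_step:
  assumes path: "contracts_near_path f Lam X S N C q \<delta>" and "s \<in> S" and fixed: "f (X s, Lam s) = X s"
    and "R \<le> \<delta>" and drift: "C * norm (X s - x') \<le> (1 - q) * R" and x: "N (x - X s) \<le> R"
  shows "N (f (x, Lam s) - x') \<le> R"
proof -
  have N: "equivalent_norm N C" and "0 \<le> q"
    using path by (simp_all add: contracts_near_path_def)
  note N_props = equivalent_normD[OF N]
  have "norm (x - X s) \<le> \<delta>" "norm (X s - X s) \<le> \<delta>"
    using N_props(2)[of "x - X s"] x \<open>R \<le> \<delta>\<close> path by (auto simp: contracts_near_path_def)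
  then have contr: "N (f (x, Lam s) - f (X s, Lam s)) \<le> q * N (x - X s)"
    using path \<open>s \<in> S\<close> by (simp add: contracts_near_path_def)
  have "f (x, Lam s) - x' = (f (x, Lam s) - f (X s, Lam s)) + (X s - x')"
    using fixed by simp
  then have "N (f (x, Lam s) - x') \<le> N (f (x, Lam s) - f (X s, Lam s)) + N (X s - x')"
    using N_props(4) by metis
  also have "\<dots> \<le> q * R + (1 - q) * R"
    using contr mult_left_mono[OF x \<open>0 \<le> q\<close>] N_props(3)[of "X s - x'"] drift by linarith
  also have "\<dots> = R"
    by (simp add: algebra_simps)
  finally show ?thesis .
qed

lemma tube_switch:
  assumes "equivalent_norm N C" "equivalent_norm N' C'" "N v \<le> R" "R * C' \<le> R'"
  shows "N' v \<le> R'"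
proof -
  note N = equivalent_normD[OF assms(1)] and N' = equivalent_normD[OF assms(2)]
  have "N' v \<le> C' * norm v"
    by (rule N'(3))
  also have "\<dots> \<le> C' * R"
    using N(2)[of v] assms(3) N'(1) by (intro mult_left_mono) auto
  finally show ?thesis
    using assms(4) by (simp add: mult.commute)
qed

lemma piecewise_tubes_forward_invariant:
  fixes f :: "'a::real_normed_vector \<times> 'p \<Rightarrow> 'a" and idx :: "real \<Rightarrow> nat"
  assumes fixed: "\<And>s. f (X s, Lam s) = X s" and "0 < r"
    and idx: "mono idx" "\<And>s. idx s \<le> K"
    and pieces: "\<And>i. contracts_near_path f Lam X {s. idx s = i} (N i) (C i) (q i) (\<delta> i)"
    and R: "\<And>i. i \<le> K \<Longrightarrow> R i \<le> \<delta> i"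
    and switch: "\<And>i j. i < j \<Longrightarrow> j \<le> K \<Longrightarrow> R i * C j \<le> R j"
    and drift: "\<And>i n. i \<le> K \<Longrightarrow> C i * norm (X (r * of_int n) - X (r * of_int (n + 1))) \<le> (1 - q i) * R i"
    and x: "N (idx (r * of_int n)) (x - X (r * of_int n)) \<le> R (idx (r * of_int n))"
  shows "N (idx (r * of_int (n + 1))) (f (x, Lam (r * of_int n)) - X (r * of_int (n + 1)))
    \<le> R (idx (r * of_int (n + 1)))"
proof -
  define i where "i = idx (r * of_int n)"
  define j where "j = idx (r * of_int (n + 1))"
  have "i \<le> j" "j \<le> K"
    using idx \<open>0 < r\<close> by (auto simp: i_def j_def mono_def)
  have step: "N i (f (x, Lam (r * of_int n)) - X (r * of_int (n + 1))) \<le> R i"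
  proof (rule tube_step[OF pieces[of i]])
    show "r * of_int n \<in> {s. idx s = i}"
      by (simp add: i_def)
    show "R i \<le> \<delta> i" "C i * norm (X (r * of_int n) - X (r * of_int (n + 1))) \<le> (1 - q i) * R i"
      using R drift \<open>i \<le> j\<close> \<open>j \<le> K\<close> by simp_all
    show "N i (x - X (r * of_int n)) \<le> R i"
      using x by (simp add: i_def)
  qed (rule fixed)
  have norms: "equivalent_norm (N k) (C k)" for k
    using pieces[of k] by (simp add: contracts_near_path_def)
  show ?thesis
  proof (cases "i = j")
    case True
    then show ?thesis
      using step by (simp add: j_def)
  next
    case False
    then have "R i * C j \<le> R j"
      using switch \<open>i \<le> j\<close> \<open>j \<le> K\<close> by simp
    then show ?thesis
      unfolding j_def[symmetric] by (rule tube_switch[OF norms norms step])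
  qed
qed

lemma solution_near_path:
  fixes f :: "'a::banach \<times> 'p::topological_space \<Rightarrow> 'a" and idx :: "real \<Rightarrow> nat" and R :: "nat \<Rightarrow> real"
  assumes f: "continuous_on UNIV f" and fixed: "\<And>s. f (X s, Lam s) = X s" and "0 < r"
    and idx: "mono idx" "\<And>s. idx s \<le> K"
    and pieces: "\<And>i. contracts_near_path f Lam X {s. idx s = i} (N i) (C i) (q i) (\<delta> i)"
    and R: "\<And>i. i \<le> K \<Longrightarrow> 0 \<le> R i" "\<And>i. i \<le> K \<Longrightarrow> R i \<le> \<delta> i" "\<And>i. i \<le> K \<Longrightarrow> R i \<le> \<rho>"
    and switch: "\<And>i j. i < j \<Longrightarrow> j \<le> K \<Longrightarrow> R i * C j \<le> R j"
    and drift: "\<And>i n. i \<le> K \<Longrightarrow> C i * norm (X (r * of_int n) - X (r * of_int (n + 1))) \<le> (1 - q i) * R i"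
  obtains y where "\<And>n. y (n + 1) = f (y n, Lam (r * of_int n))" "\<And>n. norm (y n - X (r * of_int n)) \<le> \<rho>"
proof -
  define T where "T n = {x. N (idx (r * of_int n)) (x - X (r * of_int n)) \<le> R (idx (r * of_int n))}" for n
  have norms: "equivalent_norm (N i) (C i)" for i
    using pieces[of i] by (simp add: contracts_near_path_def)
  have closed: "closed (T n)" for n
    unfolding T_def
    by (intro closed_Collect_le continuous_on_const
        continuous_on_compose2[OF equivalent_norm_continuous[OF norms] continuous_on_diff]) auto
  have cont: "continuous_on UNIV (\<lambda>x. f (x, Lam (r * of_int n)))" for n
    by (rule continuous_on_compose2[OF f continuous_on_Pair[OF continuous_on_id continuous_on_const]]) simp
  have maps: "f (x, Lam (r * of_int n)) \<in> T (n + 1)" if "x \<in> T n" for n x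
    using piecewise_tubes_forward_invariant[OF fixed \<open>0 < r\<close> idx pieces R(2) switch drift] that
    by (simp add: T_def)
  have start: "X (r * of_int n) \<in> T n" for n
  proof -
    have "N (idx (r * of_int n)) 0 \<le> 0"
      using equivalent_normD(3)[OF norms[of "idx (r * of_int n)"], where v = 0] by simp
    then show ?thesis
      using R(1)[OF idx(2)[of "r * of_int n"]] by (simp add: T_def)
  qed
  \<comment> \<open>Far in the past the index is constant, so a single norm makes all maps contractions.\<close>
  obtain a i\<^sub>0 where i\<^sub>0: "\<And>s. s \<le> a \<Longrightarrow> idx s = i\<^sub>0"
    using mono_nat_eventually_constant_at_bot[OF idx] by blast
  define n\<^sub>1 where "n\<^sub>1 = \<lfloor>a / r\<rfloor>"
  have tail: "idx (r * of_int n) = i\<^sub>0" if "n \<le> n\<^sub>1" for n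
  proof (rule i\<^sub>0)
    have "r * of_int n \<le> r * (a / r)"
      using that \<open>0 < r\<close> by (intro mult_left_mono) (auto simp: n\<^sub>1_def le_floor_iff)
    then show "r * of_int n \<le> a"
      using \<open>0 < r\<close> by simp
  qed
  have "i\<^sub>0 \<le> K"
    using idx(2)[of a] i\<^sub>0[of a] by simp
  note N\<^sub>0 = equivalent_normD[OF norms[of i\<^sub>0]]
  have close: "norm (x - X (r * of_int n)) \<le> \<delta> i\<^sub>0" if "n \<le> n\<^sub>1" "x \<in> T n" for n x
    using that tail N\<^sub>0(2)[of "x - X (r * of_int n)"] R(2)[OF \<open>i\<^sub>0 \<le> K\<close>] by (simp add: T_def)
  have contr: "N i\<^sub>0 (f (x, Lam (r * of_int n)) - f (x', Lam (r * of_int n))) \<le> q i\<^sub>0 * N i\<^sub>0 (x - x')"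
    if "n \<le> n\<^sub>1" "x \<in> T n" "x' \<in> T n" for n x x'
    using pieces[of i\<^sub>0] close[OF that(1,2)] close[OF that(1,3)] tail[OF that(1)]
    by (simp add: contracts_near_path_def)
  have diam: "N i\<^sub>0 (x - x') \<le> 2 * R i\<^sub>0" if "n \<le> n\<^sub>1" "x \<in> T n" "x' \<in> T n" for n x x'
    using N\<^sub>0(5)[of "x - X (r * of_int n)" "x' - X (r * of_int n)"] that tail by (simp add: T_def)
  have q: "0 \<le> q i\<^sub>0" "q i\<^sub>0 < 1"
    using pieces[of i\<^sub>0] by (simp_all add: contracts_near_path_def)
  obtain y where y: "\<And>n. y (n + 1) = f (y n, Lam (r * of_int n))" "\<And>n. y n \<in> T n"
  proof (rule pullback_entire_orbit[where F = "\<lambda>n x. f (x, Lam (r * of_int n))" and T = T,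
        OF cont closed maps start N\<^sub>0(2) q contr diam])
    fix y assume "\<And>n. y (n + 1) = f (y n, Lam (r * of_int n))" "\<And>n. y n \<in> T n"
    then show thesis
      by (rule that)
  qed
  have "norm (y n - X (r * of_int n)) \<le> \<rho>" for n
  proof -
    have "norm (y n - X (r * of_int n)) \<le> N (idx (r * of_int n)) (y n - X (r * of_int n))"
      by (rule equivalent_normD(2)[OF norms])
    also have "\<dots> \<le> R (idx (r * of_int n))"
      using y(2)[of n] by (simp add: T_def)
    also have "\<dots> \<le> \<rho>"
      by (rule R(3)[OF idx(2)])
    finally show ?thesis .
  qed
  then show ?thesis
    by (rule that[OF y(1)])
qed

lemma parameter_shift_continuous:
  assumes "parameter_shift Lam lm lp"
  shows "continuous_on UNIV Lam"
proof -
  obtain Lam' where "\<And>s. (Lam has_vector_derivative Lam' s) (at s)"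
    using assms unfolding parameter_shift_def by blast
  then show ?thesis
    by (intro continuous_at_imp_continuous_on ballI has_vector_derivative_continuous)
qed

lemma stable_pathD:
  assumes "stable_path f Lam lm lp X"
  shows "f (X s, Lam s) = X s" "connected (range (\<lambda>s. (s, X s)))"
    "spectral_radius_r (matrix (Dx f (X s) (Lam s))) < 1"
  using assms by (auto simp: stable_path_def is_fixed_point_def)

lemma stable_path_continuous:
  fixes f :: "(real^'l) \<times> (real^'m) \<Rightarrow> real^'l"
  assumes f: "C1_map f" and Lam: "parameter_shift Lam lm lp" and X: "stable_path f Lam lm lp X"
  shows "continuous_on UNIV X"
proof (rule continuous_if_connected_graph_in_branch_boxes[where P = "\<lambda>s x. f (x, Lam s) = x"])
  show "connected (range (\<lambda>s. (s, X s)))" and fixed: "\<And>s. f (X s, Lam s) = X s"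
    using stable_pathD[OF X] by blast+
  fix s
  obtain I V g where "branch_box (\<lambda>s x. f (x, Lam s) = x) I V g" "s \<in> I" "X s \<in> V"
    using fixed_point_branch_box[OF f parameter_shift_continuous[OF Lam] fixed stable_pathD(3)[OF X]] by blast
  then show "\<exists>I V g. branch_box (\<lambda>s x. f (x, Lam s) = x) I V g \<and> s \<in> I \<and> X s \<in> V"
    by blast
qed

lemma stable_path_piecewise_contracting:
  fixes f :: "(real^'l) \<times> (real^'m) \<Rightarrow> real^'l"
  assumes f: "C1_map f" and Lam: "parameter_shift Lam lm lp" and X: "stable_path f Lam lm lp X"
  obtains idx :: "real \<Rightarrow> nat" and K :: nat and N C q \<delta> where "mono idx" "\<And>s. idx s \<le> K"
    "\<And>i. contracts_near_path f Lam X {s. idx s = i} (N i) (C i) (q i) (\<delta> i)"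
proof -
  define P where "P S \<longleftrightarrow> (\<exists>N C q \<delta>. contracts_near_path f Lam X S N C q \<delta>)" for S
  have subset: "P S \<Longrightarrow> S' \<subseteq> S \<Longrightarrow> P S'" for S S'
    unfolding P_def using contracts_near_path_subset by blast
  have eventually_P: "\<exists>S. eventually (\<lambda>s. s \<in> S) F \<and> P S"
    if lim: "(Lam \<longlongrightarrow> \<mu>) F" "(X \<longlongrightarrow> x) F" and sr: "spectral_radius_r (matrix (Dx f x \<mu>)) < 1"
    for F \<mu> x
  proof -
    obtain S N C q \<delta> where "eventually (\<lambda>s. s \<in> S) F" "contracts_near_path f Lam X S N C q \<delta>"
      by (rule eventually_contracts_near_path[OF f sr lim])
    then show ?thesis
      unfolding P_def by blast
  qed
  have local: "\<exists>U. open U \<and> s \<in> U \<and> P U" for s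
  proof -
    have "(Lam \<longlongrightarrow> Lam s) (nhds s)" "(X \<longlongrightarrow> X s) (nhds s)"
      using parameter_shift_continuous[OF Lam] stable_path_continuous[OF f Lam X]
      by (simp_all add: continuous_on_eq_continuous_at isCont_def tendsto_at_iff_tendsto_nhds)
    from eventually_P[OF this stable_pathD(3)[OF X]]
    obtain S where "eventually (\<lambda>t. t \<in> S) (nhds s)" "P S"
      by blast
    then obtain U where "open U" "s \<in> U" "U \<subseteq> S"
      unfolding eventually_nhds by blast
    then show ?thesis
      using subset[OF \<open>P S\<close>] by blast
  qed
  obtain Xp Xm where X_lim: "(X \<longlongrightarrow> Xp) at_top" "(X \<longlongrightarrow> Xm) at_bot"
    and sr: "spectral_radius_r (matrix (Dx f Xp lp)) < 1" "spectral_radius_r (matrix (Dx f Xm lm)) < 1"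
    using X unfolding stable_path_def by blast
  have Lam_lim: "(Lam \<longlongrightarrow> lp) at_top" "(Lam \<longlongrightarrow> lm) at_bot"
    using Lam unfolding parameter_shift_def by blast+
  obtain S\<^sub>m where "eventually (\<lambda>s. s \<in> S\<^sub>m) at_bot" "P S\<^sub>m"
    using eventually_P[OF Lam_lim(2) X_lim(2) sr(2)] by blast
  then obtain a where "{..a} \<subseteq> S\<^sub>m"
    unfolding eventually_at_bot_linorder by blast
  then have bot: "P {..a}"
    by (rule subset[OF \<open>P S\<^sub>m\<close>])
  obtain S\<^sub>p where "eventually (\<lambda>s. s \<in> S\<^sub>p) at_top" "P S\<^sub>p"
    using eventually_P[OF Lam_lim(1) X_lim(1) sr(1)] by blast
  then obtain b where "{b..} \<subseteq> S\<^sub>p"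
    unfolding eventually_at_top_linorder by blast
  then have top: "P {b..}"
    by (rule subset[OF \<open>P S\<^sub>p\<close>])
  show ?thesis
  proof (rule monotone_partition[OF subset local bot top])
    fix idx :: "real \<Rightarrow> nat" and K
    assume idx: "mono idx" "\<And>s. idx s \<le> K" and "\<And>i. P {s. idx s = i}"
    then have "\<forall>i. \<exists>N C q \<delta>. contracts_near_path f Lam X {s. idx s = i} N C q \<delta>"
      by (simp add: P_def)
    then obtain N C q \<delta> where "\<forall>i. contracts_near_path f Lam X {s. idx s = i} (N i) (C i) (q i) (\<delta> i)"
      by (auto simp only: choice_iff)
    then show ?thesis
      by (intro that[OF idx, of N C q \<delta>]) simp
  qed
qed

lemma piecewise_contracting_path_near_solutions:
  fixes f :: "'a::banach \<times> 'p::topological_space \<Rightarrow> 'a" and idx :: "real \<Rightarrow> nat"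
  assumes f: "continuous_on UNIV f" and fixed: "\<And>s. f (X s, Lam s) = X s"
    and X: "uniformly_continuous_on UNIV X"
    and idx: "mono idx" "\<And>s. idx s \<le> K"
    and pieces: "\<And>i. contracts_near_path f Lam X {s. idx s = i} (N i) (C i) (q i) (\<delta> i)"
    and "0 < \<rho>"
  obtains r\<^sub>0 where "0 < r\<^sub>0" "\<And>r. 0 < r \<Longrightarrow> r < r\<^sub>0 \<Longrightarrow>
    \<exists>y. (\<forall>n. y (n + 1) = f (y n, Lam (r * of_int n))) \<and> (\<forall>n. norm (y n - X (r * of_int n)) \<le> \<rho>)"
proof -
  have C: "1 \<le> C i" and q: "q i < 1" and \<delta>: "0 < min (\<delta> i) \<rho>" for i
    using pieces[of i] \<open>0 < \<rho>\<close> by (auto simp: contracts_near_path_def equivalent_norm_def)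
  obtain R D where "0 < D" and R: "\<And>i. i \<le> K \<Longrightarrow> 0 < R i" "\<And>i. i \<le> K \<Longrightarrow> R i \<le> min (\<delta> i) \<rho>"
    and switch: "\<And>i j. i < j \<Longrightarrow> j \<le> K \<Longrightarrow> R i * C j \<le> R j"
    and drift: "\<And>i. i \<le> K \<Longrightarrow> C i * D \<le> (1 - q i) * R i"
  proof (rule switching_radii[of K C q "\<lambda>i. min (\<delta> i) \<rho>"])
    fix R D
    assume "0 < D" "\<And>i. i \<le> K \<Longrightarrow> 0 < R i" "\<And>i. i \<le> K \<Longrightarrow> R i \<le> min (\<delta> i) \<rho>"
      "\<And>i j. i < j \<Longrightarrow> j \<le> K \<Longrightarrow> R i * C j \<le> R j" "\<And>i. i \<le> K \<Longrightarrow> C i * D \<le> (1 - q i) * R i"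
    then show thesis
      by (rule that)
  qed (use C q \<delta> in auto)
  from X[unfolded uniformly_continuous_on_def, rule_format, OF \<open>0 < D\<close>]
  obtain r\<^sub>0 where "0 < r\<^sub>0" and r\<^sub>0: "\<And>s s'. dist s' s < r\<^sub>0 \<Longrightarrow> dist (X s') (X s) < D"
    by blast
  show ?thesis
  proof (rule that[OF \<open>0 < r\<^sub>0\<close>])
    fix r :: real assume "0 < r" "r < r\<^sub>0"
    have drift_step: "C i * norm (X (r * of_int n) - X (r * of_int (n + 1))) \<le> (1 - q i) * R i"
      if "i \<le> K" for i n
    proof -
      have "norm (X (r * of_int n) - X (r * of_int (n + 1))) \<le> D"
        using r\<^sub>0[of "r * of_int (n + 1)" "r * of_int n"] \<open>0 < r\<close> \<open>r < r\<^sub>0\<close>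
        by (simp add: dist_norm norm_minus_commute algebra_simps)
      then show ?thesis
        using drift[OF that] C[of i] by (meson mult_left_mono order_trans zero_le_one)
    qed
    obtain y where "\<And>n. y (n + 1) = f (y n, Lam (r * of_int n))"
      "\<And>n. norm (y n - X (r * of_int n)) \<le> \<rho>"
    proof (rule solution_near_path[OF f fixed \<open>0 < r\<close> idx pieces, of R \<rho>])
      fix y
      assume "\<And>n. y (n + 1) = f (y n, Lam (r * of_int n))" "\<And>n. norm (y n - X (r * of_int n)) \<le> \<rho>"
      then show thesis
        by (rule that)
    qed (use R switch drift_step in \<open>auto simp: less_imp_le\<close>)
    then show "\<exists>y. (\<forall>n. y (n + 1) = f (y n, Lam (r * of_int n))) \<and> (\<forall>n. norm (y n - X (r * of_int n)) \<le> \<rho>)"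
      by blast
  qed
qed

theorem mainTheorem3:
  fixes f :: "(real^'l) \<times> (real^'m) \<Rightarrow> real^'l"
    and Lam :: "real \<Rightarrow> real^'m"
    and lm lp :: "real^'m"
    and X :: "real \<Rightarrow> real^'l"
    and \<epsilon> :: real
  assumes "C1_map f"
    and "parameter_shift Lam lm lp"
    and "stable_path f Lam lm lp X"
    and "\<epsilon> > 0"
  shows "\<exists>r0>0. \<forall>r. 0 < r \<and> r < r0 \<longrightarrow>
           (\<exists>y. is_solution f Lam r y \<and> (\<forall>n::int. norm (y n - X (r * of_int n)) < \<epsilon>))"
proof -
  obtain Xp Xm where "(X \<longlongrightarrow> Xp) at_top" "(X \<longlongrightarrow> Xm) at_bot"
    using assms(3) unfolding stable_path_def by blast
  then have X: "uniformly_continuous_on UNIV X"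
    using stable_path_continuous[OF assms(1-3)] by (intro uniformly_continuous_if_tendsto_at_top_at_bot)
  show ?thesis
  proof (rule stable_path_piecewise_contracting[OF assms(1-3)])
    fix idx :: "real \<Rightarrow> nat" and K N C q \<delta>
    assume "mono idx" "\<And>s. idx s \<le> K"
      and "\<And>i. contracts_near_path f Lam X {s. idx s = i} (N i) (C i) (q i) (\<delta> i)"
    from piecewise_contracting_path_near_solutions[OF C1_map_continuous[OF assms(1)]
        stable_pathD(1)[OF assms(3)] X this, of "\<epsilon> / 2"] assms(4)
    obtain r\<^sub>0 where "0 < r\<^sub>0" and r\<^sub>0: "\<And>r. 0 < r \<Longrightarrow> r < r\<^sub>0 \<Longrightarrow>
        \<exists>y. (\<forall>n. y (n + 1) = f (y n, Lam (r * of_int n))) \<and> (\<forall>n. norm (y n - X (r * of_int n)) \<le> \<epsilon> / 2)"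
      by auto
    have "\<exists>y. is_solution f Lam r y \<and> (\<forall>n. norm (y n - X (r * of_int n)) < \<epsilon>)"
      if r: "0 < r" "r < r\<^sub>0" for r
    proof -
      obtain y where "\<forall>n. y (n + 1) = f (y n, Lam (r * of_int n))" "\<forall>n. norm (y n - X (r * of_int n)) \<le> \<epsilon> / 2"
        using r\<^sub>0[OF r] by blast
      moreover have "\<epsilon> / 2 < \<epsilon>"
        using assms(4) by simp
      ultimately show ?thesis
        unfolding is_solution_def by (blast intro: le_less_trans)
    qed
    then show ?thesis
      using \<open>0 < r\<^sub>0\<close> by blast
  qed
qed

end
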